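(* Let $\rho,\sigma$ be density operators on a finite-dimensional Hilbert space and $\epsilon_\rho,\epsilon_\sigma\ge0$. Then $\beta_{\epsilon_\rho}(\rho\|\sigma)\le\epsilon_\sigma$ if and only if $(\rho,\sigma)\succeq_{(\epsilon_\rho,\epsilon_\sigma)}(\rho',\sigma')$ for all density operators $\rho',\sigma'$ (on any finite-dimensional Hilbert space).
   Context: $T(\rho,\sigma)=\frac12\|\rho-\sigma\|_1$; $(\rho,\sigma)\succeq_{(\epsilon_\rho,\epsilon_\sigma)}(\rho',\sigma')$ means some quantum channel $\mathcal E$ satisfies $T(\mathcal E(\rho),\rho')\le\epsilon_\rho$ and $T(\mathcal E(\sigma),\sigma')\le\epsilon_\sigma$. $\beta_x(\rho\|\sigma)=\min\{\mathrm{Tr}(\sigma Q):0\le Q\le\mathbb1,\ \mathrm{Tr}(\rho Q)\ge1-x\}$. *)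

theory Defs
  imports "Jordan_Normal_Form.Matrix" "Jordan_Normal_Form.Char_Poly"
begin

text \<open>Operators on the Hilbert space C^n are n x n complex matrices.\<close>

definition adj :: "complex mat \<Rightarrow> complex mat" where
  "adj A = mat (dim_col A) (dim_row A) (\<lambda>(i,j). cnj (A $$ (j,i)))"

definition mtrace :: "complex mat \<Rightarrow> complex" where
  "mtrace A = (\<Sum>i<dim_row A. A $$ (i,i))"

definition psd :: "nat \<Rightarrow> complex mat \<Rightarrow> bool" where
  "psd n A \<longleftrightarrow> A \<in> carrier_mat n n \<and> adj A = A \<and>
     (\<forall>v \<in> carrier_vec n. 0 \<le> Re (map_vec cnj v \<bullet> (A *\<^sub>v v)))"

definition density :: "nat \<Rightarrow> complex mat \<Rightarrow> bool" where
  "density n A \<longleftrightarrow> psd n A \<and> mtrace A = 1"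

text \<open>Trace norm ||A||_1 = sum of the singular values of A, i.e. sum of the
  square roots of the eigenvalues of A^* A (counted with algebraic multiplicity).\<close>
definition trace_norm :: "complex mat \<Rightarrow> real" where
  "trace_norm A = (let p = char_poly (adj A * A) in
     \<Sum>z\<in>{z. poly p z = 0}. real (order z p) * sqrt (Re z))"

definition trace_dist :: "complex mat \<Rightarrow> complex mat \<Rightarrow> real" where
  "trace_dist \<rho> \<sigma> = trace_norm (\<rho> - \<sigma>) / 2"

text \<open>Quantum channel from operators on C^n to operators on C^m, given in
  Kraus form: E(A) = sum_k K_k A K_k^*, with sum_k K_k^* K_k = 1.\<close>
definition kraus_apply :: "nat \<Rightarrow> complex mat list \<Rightarrow> complex mat \<Rightarrow> complex mat" where
  "kraus_apply m Ks A = foldr (\<lambda>K acc. K * A * adj K + acc) Ks (0\<^sub>m m m)"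

definition quantum_channel :: "nat \<Rightarrow> nat \<Rightarrow> (complex mat \<Rightarrow> complex mat) \<Rightarrow> bool" where
  "quantum_channel n m E \<longleftrightarrow> (\<exists>Ks. (\<forall>K \<in> set Ks. K \<in> carrier_mat m n) \<and>
      foldr (\<lambda>K acc. adj K * K + acc) Ks (0\<^sub>m n n) = 1\<^sub>m n \<and>
      (\<forall>A \<in> carrier_mat n n. E A = kraus_apply m Ks A))"

definition rel_maj :: "nat \<Rightarrow> nat \<Rightarrow> real \<Rightarrow> real \<Rightarrow> complex mat \<Rightarrow> complex mat
    \<Rightarrow> complex mat \<Rightarrow> complex mat \<Rightarrow> bool" where
  "rel_maj n m er es \<rho> \<sigma> \<rho>' \<sigma>' \<longleftrightarrow> (\<exists>E. quantum_channel n m E \<and>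
      trace_dist (E \<rho>) \<rho>' \<le> er \<and> trace_dist (E \<sigma>) \<sigma>' \<le> es)"

text \<open>Hypothesis testing quantity beta_x(rho||sigma) on C^n (the minimum is attained,
  so it equals the infimum).\<close>
definition beta :: "nat \<Rightarrow> real \<Rightarrow> complex mat \<Rightarrow> complex mat \<Rightarrow> real" where
  "beta n x \<rho> \<sigma> = Inf {Re (mtrace (\<sigma> * Q)) | Q. psd n Q \<and> psd n (1\<^sub>m n - Q) \<and>
      Re (mtrace (\<rho> * Q)) \<ge> 1 - x}"

end

theory Submission
  imports Defs "Jordan_Normal_Form.Spectral_Radius"
begin

text \<open>If a test \<open>0 \<le> Q \<le> 1\<close> attains the minimum defining \<open>\<beta>\<^bsub>\<epsilon>\<^sub>\<rho>\<^esub>(\<rho>\<parallel>\<sigma>)\<close> (it exists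
  because the tests form a compact set), the measure-and-prepare channel
  \<open>A \<mapsto> tr(AQ) \<rho>' + tr(A(1 - Q)) \<sigma>'\<close> moves \<open>\<rho>\<close> to within trace distance
  \<open>1 - tr(\<rho>Q) \<le> \<epsilon>\<^sub>\<rho>\<close> of \<open>\<rho>'\<close> and \<open>\<sigma>\<close> to within \<open>tr(\<sigma>Q) \<le> \<epsilon>\<^sub>\<sigma>\<close> of \<open>\<sigma>'\<close>.
  Conversely, a channel \<open>\<E>\<close> that brings \<open>\<rho>\<close> and \<open>\<sigma>\<close> close to the orthogonal pure states
  \<open>|0\<rangle>\<langle>0|\<close> and \<open>|1\<rangle>\<langle>1|\<close> yields the test \<open>Q = \<E>\<^sup>\<dagger>(|0\<rangle>\<langle>0|)\<close>: \<open>tr(\<rho>Q)\<close> and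
  \<open>tr(\<sigma>Q)\<close> are the \<open>(0,0)\<close> entries of \<open>\<E>(\<rho>)\<close> and \<open>\<E>(\<sigma>)\<close>, and the trace distance of
  two Hermitian matrices of equal trace bounds the difference of their diagonal entries.\<close>

section \<open>Adjoints and unitary matrices\<close>

lemma index_mult_mat_sum:
  assumes "A \<in> carrier_mat nr n" "B \<in> carrier_mat n nc" "i < nr" "j < nc"
  shows "(A * B) $$ (i,j) = (\<Sum>k<n. A $$ (i,k) * B $$ (k,j))"
  using assms by (auto simp: scalar_prod_def atLeast0LessThan)

lemma cnj_mult_self: "cnj z * z = complex_of_real ((cmod z)\<^sup>2)"
  by (metis complex_norm_square mult.commute)

lemma adj_dim [simp]: "dim_row (adj A) = dim_col A" "dim_col (adj A) = dim_row A"
  by (auto simp: adj_def)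

lemma adj_carrier [simp]: "A \<in> carrier_mat nr nc \<Longrightarrow> adj A \<in> carrier_mat nc nr"
  by (auto simp: adj_def)

lemma index_adj [simp]: "i < dim_col A \<Longrightarrow> j < dim_row A \<Longrightarrow> adj A $$ (i,j) = cnj (A $$ (j,i))"
  by (auto simp: adj_def)

lemma adj_adj [simp]: "adj (adj A) = A"
  by (rule eq_matI) auto

lemma adj_one [simp]: "adj (1\<^sub>m n) = 1\<^sub>m n"
  by (rule eq_matI) auto

lemma adj_minus:
  assumes "A \<in> carrier_mat nr nc" "B \<in> carrier_mat nr nc"
  shows "adj (A - B) = adj A - adj B"
  using assms by (intro eq_matI) auto

lemma adj_mult:
  assumes A: "A \<in> carrier_mat nr n" and B: "B \<in> carrier_mat n nc"
  shows "adj (A * B) = adj B * adj A"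
proof (rule eq_matI)
  fix i j assume "i < dim_row (adj B * adj A)" "j < dim_col (adj B * adj A)"
  then have i: "i < nc" and j: "j < nr" using A B by auto
  have "adj (A * B) $$ (i,j) = (\<Sum>k<n. cnj (A $$ (j,k)) * cnj (B $$ (k,i)))"
    using index_mult_mat_sum[OF A B j i] A B i j by simp
  also have "\<dots> = (adj B * adj A) $$ (i,j)"
    using A B i j by (subst index_mult_mat_sum[of _ nc n _ nr]) (auto simp: mult.commute)
  finally show "adj (A * B) $$ (i,j) = (adj B * adj A) $$ (i,j)" .
qed (use A B in auto)

lemma index_mat_diag [simp]:
  "i < n \<Longrightarrow> j < n \<Longrightarrow> mat_diag n f $$ (i,j) = (if i = j then f i else 0)"
  by (simp add: mat_diag_def)

lemma dim_mat_diag [simp]: "dim_row (mat_diag n f) = n" "dim_col (mat_diag n f) = n"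
  by (simp_all add: mat_diag_def)

lemma adj_mat_diag_real [simp]:
  "adj (mat_diag n (\<lambda>i. complex_of_real (d i))) = mat_diag n (\<lambda>i. complex_of_real (d i))"
  by (rule eq_matI) auto

definition unitary :: "nat \<Rightarrow> complex mat \<Rightarrow> bool" where
  "unitary n U \<longleftrightarrow> U \<in> carrier_mat n n \<and> adj U * U = 1\<^sub>m n"

lemma unitary_carrier: "unitary n U \<Longrightarrow> U \<in> carrier_mat n n"
  by (simp add: unitary_def)

lemma unitary_mult_adj: "unitary n U \<Longrightarrow> U * adj U = 1\<^sub>m n"
  using mat_mult_left_right_inverse[of "adj U" n U] by (auto simp: unitary_def)

lemma unitary_mult:
  assumes U: "unitary n U" and V: "unitary n V"
  shows "unitary n (U * V)"
proof -
  have Uc: "U \<in> carrier_mat n n" and Vc: "V \<in> carrier_mat n n"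
    using U V by (auto simp: unitary_def)
  have "adj U * (U * V) = (adj U * U) * V"
    using Uc Vc by (simp add: assoc_mult_mat[of _ n n _ n _ n])
  then have "adj U * (U * V) = V" using U Vc by (simp add: unitary_def)
  then have "adj (U * V) * (U * V) = adj V * V"
    using Uc Vc by (simp add: adj_mult assoc_mult_mat[of _ n n _ n _ n])
  then show ?thesis using V Uc Vc by (simp add: unitary_def)
qed

lemma unitary_cols_orthonormal:
  assumes U: "unitary n U" and i: "i < n" and l: "l < n"
  shows "(\<Sum>j<n. cnj (U $$ (j,i)) * U $$ (j,l)) = (if i = l then 1 else 0)"
proof -
  have Uc: "U \<in> carrier_mat n n" using unitary_carrier[OF U] .
  have "(\<Sum>j<n. cnj (U $$ (j,i)) * U $$ (j,l)) = (adj U * U) $$ (i,l)"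
    using Uc i l by (subst index_mult_mat_sum[of _ n n _ n]) auto
  then show ?thesis using U i l by (simp add: unitary_def)
qed

lemma unitary_rows_orthonormal:
  assumes U: "unitary n U" and j: "j < n" and k: "k < n"
  shows "(\<Sum>i<n. U $$ (j,i) * cnj (U $$ (k,i))) = (if j = k then 1 else 0)"
proof -
  have Uc: "U \<in> carrier_mat n n" using unitary_carrier[OF U] .
  have "(\<Sum>i<n. U $$ (j,i) * cnj (U $$ (k,i))) = (U * adj U) $$ (j,k)"
    using Uc j k by (subst index_mult_mat_sum[of _ n n _ n]) auto
  then show ?thesis using unitary_mult_adj[OF U] j k by simp
qed

lemma index_unitary_conj_diag:
  assumes U: "U \<in> carrier_mat n n" and j: "j < n" and k: "k < n"
  shows "(U * mat_diag n f * adj U) $$ (j,k) = (\<Sum>i<n. U $$ (j,i) * f i * cnj (U $$ (k,i)))"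
proof -
  have "(U * mat_diag n f) $$ (j,i) = U $$ (j,i) * f i" if "i < n" for i
    using U j that by (simp add: mat_diag_mult_right)
  then show ?thesis
    using U j k by (subst index_mult_mat_sum[of _ n n _ n]) auto
qed

lemma unitary_cancel_left:
  assumes "unitary n U" "X \<in> carrier_mat n k"
  shows "adj U * (U * X) = X"
  using assms by (simp add: unitary_def assoc_mult_mat[symmetric, of _ n n _ n X k])

lemma unitary_undo_conj:
  assumes U: "unitary n U" and A: "A \<in> carrier_mat n n"
  shows "U * (adj U * A * U) * adj U = A"
proof -
  have Uc: "U \<in> carrier_mat n n" and aU: "adj U \<in> carrier_mat n n"
    using U by (simp_all add: unitary_def)
  have X: "adj U * A \<in> carrier_mat n n" using aU A by simp
  have "U * (adj U * A * U) * adj U = U * (adj U * A) * (U * adj U)"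
    using assoc_mult_mat[OF Uc X Uc] assoc_mult_mat[OF mult_carrier_mat[OF Uc X] Uc aU] by simp
  also have "\<dots> = A"
    using unitary_mult_adj[OF U] assoc_mult_mat[OF Uc aU A, symmetric] A X Uc by simp
  finally show ?thesis .
qed

section \<open>The spectral theorem for Hermitian matrices\<close>

definition outer_mat :: "nat \<Rightarrow> nat \<Rightarrow> (nat \<Rightarrow> complex) \<Rightarrow> (nat \<Rightarrow> complex) \<Rightarrow> complex mat" where
  "outer_mat m n x y = mat m n (\<lambda>(i,j). x i * cnj (y j))"

lemma outer_mat_carrier [simp]: "outer_mat m n x y \<in> carrier_mat m n"
  by (simp add: outer_mat_def)

lemma dim_outer_mat [simp]: "dim_row (outer_mat m n x y) = m" "dim_col (outer_mat m n x y) = n"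
  by (simp_all add: outer_mat_def)

lemma index_outer_mat [simp]: "i < m \<Longrightarrow> j < n \<Longrightarrow> outer_mat m n x y $$ (i,j) = x i * cnj (y j)"
  by (simp add: outer_mat_def)

lemma householder_unitary:
  assumes N: "(\<Sum>i<n. (cmod (w i))\<^sup>2) = N" and N0: "N \<noteq> 0"
  shows "unitary n (1\<^sub>m n - complex_of_real (2 / N) \<cdot>\<^sub>m outer_mat n n w w)"
proof -
  define c where "c = complex_of_real (2 / N)"
  define H where "H = mat n n (\<lambda>(i,j). (if i = j then 1 else 0) - c * w i * cnj (w j))"
  have cc: "cnj c = c" by (simp add: c_def)
  have Nc: "(\<Sum>k<n. cnj (w k) * w k) = complex_of_real N"
    unfolding N[symmetric] by (simp add: cnj_mult_self)
  have cN: "c * c * complex_of_real N = 2 * c"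
    using N0 by (simp add: c_def power2_eq_square field_simps flip: of_real_mult)
  have "adj H * H = 1\<^sub>m n"
  proof (rule eq_matI)
    fix i j assume "i < dim_row (1\<^sub>m n)" "j < dim_col (1\<^sub>m n)"
    then have i: "i < n" and j: "j < n" by auto
    have "(adj H * H) $$ (i,j) = (\<Sum>k<n. ((if k = i then 1 else 0) - c * cnj (w k) * w i) *
                                           ((if k = j then 1 else 0) - c * w k * cnj (w j)))"
      using i j by (subst index_mult_mat_sum[of _ n n _ n]) (auto simp: H_def cc intro!: sum.cong)
    also have "\<dots> = (\<Sum>k<n. (if k = i then 1 else 0) * (if k = j then 1 else 0))
        - (\<Sum>k<n. (if k = i then 1 else 0) * (c * w k * cnj (w j)))
        - (\<Sum>k<n. (if k = j then 1 else 0) * (c * cnj (w k) * w i))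
        + c * c * w i * cnj (w j) * (\<Sum>k<n. cnj (w k) * w k)"
      by (simp add: algebra_simps sum.distrib sum_subtractf sum_distrib_left)
    also have "\<dots> = (if i = j then 1 else 0) - 2 * c * w i * cnj (w j)
               + c * c * complex_of_real N * w i * cnj (w j)"
      using i j by (simp add: Nc if_distrib[of "\<lambda>x. x * _"] cong: if_cong)
    also have "\<dots> = 1\<^sub>m n $$ (i,j)" using i j cN by simp
    finally show "(adj H * H) $$ (i,j) = 1\<^sub>m n $$ (i,j)" .
  qed (auto simp: H_def)
  moreover have "1\<^sub>m n - c \<cdot>\<^sub>m outer_mat n n w w = H"
    by (rule eq_matI) (auto simp: H_def)
  ultimately show ?thesis by (simp add: unitary_def H_def c_def)
qed

lemma norm_sq_sub_phase_basis:
  fixes u :: "nat \<Rightarrow> complex" and n :: nat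
  assumes n: "0 < n" and u: "(\<Sum>i<n. (cmod (u i))\<^sup>2) = 1"
    and th: "cmod th = 1" "u 0 = th * complex_of_real (cmod (u 0))"
  shows "(\<Sum>i<n. (cmod (u i - (if i = 0 then th else 0)))\<^sup>2) = 2 - 2 * cmod (u 0)"
proof -
  obtain n' where n': "n = Suc n'" using n by (cases n) auto
  have "u 0 - th = th * complex_of_real (cmod (u 0) - 1)" using th(2) by (simp add: algebra_simps)
  then have "cmod (u 0 - th) = \<bar>cmod (u 0) - 1\<bar>" by (simp only: norm_mult th(1) norm_of_real) simp
  moreover have "(\<Sum>i<n'. (cmod (u (Suc i)))\<^sup>2) = 1 - (cmod (u 0))\<^sup>2"
    using u unfolding n' sum.lessThan_Suc_shift by simp
  ultimately show ?thesis
    unfolding n' sum.lessThan_Suc_shift by (simp add: power2_eq_square algebra_simps)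
qed

text \<open>The reflection through the hyperplane orthogonal to \<open>u - \<theta> e\<^sub>0\<close>, where \<open>\<theta>\<close>
  is the phase of \<open>u 0\<close>, maps \<open>e\<^sub>0\<close> to a multiple of \<open>u\<close>.\<close>

lemma unitary_first_col_exists:
  assumes n: "0 < n" and u: "(\<Sum>i<n. (cmod (u i))\<^sup>2) = 1"
  obtains H t where "unitary n H" "\<And>i. i < n \<Longrightarrow> H $$ (i,0) = t * u i"
proof -
  define a where "a = u 0"
  define th where "th = (if a = 0 then 1 else a / complex_of_real (cmod a))"
  have th1: "cmod th = 1" by (auto simp: th_def norm_divide)
  have tha: "a = th * complex_of_real (cmod a)" by (auto simp: th_def)
  have cth: "cnj th * th = 1" using th1 by (simp add: cnj_mult_self)
  define w where "w = (\<lambda>i. u i - (if i = 0 then th else 0))"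
  define N where "N = (\<Sum>i<n. (cmod (w i))\<^sup>2)"
  have N: "N = 2 - 2 * cmod a"
    unfolding N_def w_def a_def using norm_sq_sub_phase_basis[OF n u th1] tha by (simp add: a_def)
  show ?thesis
  proof (cases "N = 0")
    case True
    then have "w i = 0" if "i < n" for i
      using that unfolding N_def by (subst (asm) sum_nonneg_eq_0_iff) auto
    then have "1\<^sub>m n $$ (i,0) = cnj th * u i" if "i < n" for i
      using that n cth by (auto simp: w_def)
    then show ?thesis by (intro that[of "1\<^sub>m n" "cnj th"]) (simp_all add: unitary_def)
  next
    case False
    define c where "c = complex_of_real (2 / N)"
    have "cnj (w 0) = - cnj th * complex_of_real (1 - cmod a)"
      using arg_cong[OF tha, of cnj] by (simp add: w_def a_def[symmetric] algebra_simps)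
    then have "c * cnj (w 0) = - cnj th * complex_of_real (2 / N * (1 - cmod a))"
      by (simp add: c_def)
    also have "2 / N * (1 - cmod a) = 1" using False by (simp add: N field_simps)
    finally have cw: "c * cnj (w 0) = - cnj th" by simp
    have "(1\<^sub>m n - c \<cdot>\<^sub>m outer_mat n n w w) $$ (i,0) = cnj th * u i" if i: "i < n" for i
    proof -
      have "(1\<^sub>m n - c \<cdot>\<^sub>m outer_mat n n w w) $$ (i,0) = (if i = 0 then 1 else 0) - w i * (c * cnj (w 0))"
        using i n by (simp add: algebra_simps)
      also have "\<dots> = cnj th * u i" unfolding cw using cth by (simp add: w_def algebra_simps)
      finally show ?thesis .
    qed
    moreover have "unitary n (1\<^sub>m n - c \<cdot>\<^sub>m outer_mat n n w w)"
      unfolding c_def by (rule householder_unitary[OF N_def[symmetric] False])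
    ultimately show ?thesis using that by blast
  qed
qed

definition diag_cons :: "complex \<Rightarrow> complex mat \<Rightarrow> complex mat" where
  "diag_cons x B = mat (Suc (dim_row B)) (Suc (dim_col B))
     (\<lambda>(i,j). if i = 0 then (if j = 0 then x else 0) else if j = 0 then 0 else B $$ (i - 1, j - 1))"

lemma dim_diag_cons [simp]:
  "dim_row (diag_cons x B) = Suc (dim_row B)" "dim_col (diag_cons x B) = Suc (dim_col B)"
  by (simp_all add: diag_cons_def)

lemma diag_cons_carrier [simp]: "B \<in> carrier_mat n m \<Longrightarrow> diag_cons x B \<in> carrier_mat (Suc n) (Suc m)"
  by (simp add: diag_cons_def)

lemma index_diag_cons:
  "i < Suc (dim_row B) \<Longrightarrow> j < Suc (dim_col B) \<Longrightarrow> diag_cons x B $$ (i,j) =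
     (if i = 0 then (if j = 0 then x else 0) else if j = 0 then 0 else B $$ (i - 1, j - 1))"
  by (simp add: diag_cons_def)

lemma index_diag_cons_simps [simp]:
  "diag_cons x B $$ (0,0) = x"
  "j < dim_col B \<Longrightarrow> diag_cons x B $$ (0, Suc j) = 0"
  "i < dim_row B \<Longrightarrow> diag_cons x B $$ (Suc i, 0) = 0"
  "i < dim_row B \<Longrightarrow> j < dim_col B \<Longrightarrow> diag_cons x B $$ (Suc i, Suc j) = B $$ (i,j)"
  by (simp_all add: diag_cons_def)

lemma diag_cons_mult:
  assumes B: "B \<in> carrier_mat n n" and C: "C \<in> carrier_mat n n"
  shows "diag_cons x B * diag_cons y C = diag_cons (x * y) (B * C)"
proof (rule eq_matI)
  fix i j assume "i < dim_row (diag_cons (x * y) (B * C))" "j < dim_col (diag_cons (x * y) (B * C))"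
  then have i: "i < Suc n" and j: "j < Suc n" using B C by auto
  have "(diag_cons x B * diag_cons y C) $$ (i,j)
      = diag_cons x B $$ (i,0) * diag_cons y C $$ (0,j)
        + (\<Sum>k<n. diag_cons x B $$ (i,Suc k) * diag_cons y C $$ (Suc k,j))"
    using B C i j by (subst index_mult_mat_sum[of _ "Suc n" "Suc n" _ "Suc n"])
      (auto simp: sum.lessThan_Suc_shift simp del: sum.lessThan_Suc)
  also have "\<dots> = diag_cons (x * y) (B * C) $$ (i,j)"
    using B C i j by (cases i; cases j) (auto simp: scalar_prod_def atLeast0LessThan)
  finally show "(diag_cons x B * diag_cons y C) $$ (i,j) = diag_cons (x * y) (B * C) $$ (i,j)" .
qed (use B C in auto)

lemma adj_diag_cons: "adj (diag_cons x B) = diag_cons (cnj x) (adj B)"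
  by (rule eq_matI) (auto simp: index_diag_cons)

lemma unitary_diag_cons: "unitary n U \<Longrightarrow> unitary (Suc n) (diag_cons 1 U)"
proof -
  assume "unitary n U"
  moreover have "diag_cons 1 (1\<^sub>m n) = 1\<^sub>m (Suc n)"
    by (rule eq_matI) (auto simp: index_diag_cons)
  ultimately show ?thesis
    by (simp add: unitary_def adj_diag_cons diag_cons_mult[of "adj U" n U])
qed

lemma mat_diag_Suc: "mat_diag (Suc n) f = diag_cons (f 0) (mat_diag n (\<lambda>i. f (Suc i)))"
  by (rule eq_matI) (auto simp: index_diag_cons)

lemma unit_eigenvector_exists:
  assumes A: "A \<in> carrier_mat n n" and n: "0 < n"
  obtains e u where "(\<Sum>i<n. (cmod (u i))\<^sup>2) = 1" "\<And>k. k < n \<Longrightarrow> (\<Sum>l<n. A $$ (k,l) * u l) = e * u k"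
proof -
  obtain e where "eigenvalue A e" using spectrum_non_empty[OF A n] by (auto simp: spectrum_def)
  then obtain v where v: "v \<in> carrier_vec n" "v \<noteq> 0\<^sub>v n" and ev: "A *\<^sub>v v = e \<cdot>\<^sub>v v"
    using A by (auto simp: eigenvalue_def eigenvector_def)
  define s where "s = (\<Sum>i<n. (cmod (v $ i))\<^sup>2)"
  have "s \<noteq> 0"
  proof
    assume "s = 0"
    then have "\<forall>i<n. v $ i = 0" unfolding s_def by (subst (asm) sum_nonneg_eq_0_iff) auto
    then show False using v by (auto intro: eq_vecI)
  qed
  then have s: "s > 0" unfolding s_def by (simp add: order_le_neq_trans sum_nonneg)
  define u where "u i = v $ i / complex_of_real (sqrt s)" for i
  have "(\<Sum>i<n. (cmod (u i))\<^sup>2) = (\<Sum>i<n. (cmod (v $ i))\<^sup>2) / s"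
    using s by (simp add: u_def norm_divide power_divide sum_divide_distrib)
  then have "(\<Sum>i<n. (cmod (u i))\<^sup>2) = 1" using s by (simp add: s_def)
  moreover have "(\<Sum>l<n. A $$ (k,l) * u l) = e * u k" if k: "k < n" for k
  proof -
    have "(\<Sum>l<n. A $$ (k,l) * v $ l) = e * v $ k"
      using arg_cong[OF ev, of "\<lambda>w. w $ k"] A v k by (auto simp: scalar_prod_def atLeast0LessThan)
    then show ?thesis by (simp add: u_def sum_divide_distrib[symmetric])
  qed
  ultimately show ?thesis by (rule that)
qed

lemma unitary_eigenvector_first_col:
  assumes A: "A \<in> carrier_mat (Suc n) (Suc n)"
  obtains H e where "unitary (Suc n) H"
    "\<And>i. i < Suc n \<Longrightarrow> (adj H * A * H) $$ (i,0) = (if i = 0 then e else 0)"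
proof -
  obtain e u where u: "(\<Sum>i<Suc n. (cmod (u i))\<^sup>2) = 1"
    and eu: "\<And>k. k < Suc n \<Longrightarrow> (\<Sum>l<Suc n. A $$ (k,l) * u l) = e * u k"
    using unit_eigenvector_exists[OF A] by blast
  obtain H t where H: "unitary (Suc n) H" and H0: "\<And>i. i < Suc n \<Longrightarrow> H $$ (i,0) = t * u i"
    using unitary_first_col_exists[OF _ u] by blast
  have Hc: "H \<in> carrier_mat (Suc n) (Suc n)" using unitary_carrier[OF H] .
  have AH0: "(A * H) $$ (k,0) = e * H $$ (k,0)" if k: "k < Suc n" for k
  proof -
    have "(A * H) $$ (k,0) = t * (\<Sum>l<Suc n. A $$ (k,l) * u l)"
      using A Hc k by (subst index_mult_mat_sum[of _ "Suc n" "Suc n" _ "Suc n"])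
        (auto simp: H0 sum_distrib_left mult_ac simp del: sum.lessThan_Suc)
    then show ?thesis using eu[OF k] H0[OF k] by simp
  qed
  have "(adj H * A * H) $$ (i,0) = (if i = 0 then e else 0)" if i: "i < Suc n" for i
  proof -
    have "(adj H * A * H) $$ (i,0) = (adj H * (A * H)) $$ (i,0)"
      using assoc_mult_mat[OF adj_carrier[OF Hc] A Hc] by simp
    also have "\<dots> = (\<Sum>k<Suc n. adj H $$ (i,k) * (e * H $$ (k,0)))"
      using A Hc i by (subst index_mult_mat_sum[of _ "Suc n" "Suc n" _ "Suc n"])
        (auto simp: AH0 simp del: index_mult_mat)
    also have "\<dots> = e * (adj H * H) $$ (i,0)"
      using Hc i by (subst index_mult_mat_sum[of _ "Suc n" "Suc n" _ "Suc n"])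
        (auto simp: sum_distrib_left mult_ac simp del: sum.lessThan_Suc)
    finally show ?thesis using H i by (simp add: unitary_def)
  qed
  with H show ?thesis by (rule that)
qed

lemma hermitian_first_col_diag_cons:
  assumes M: "M \<in> carrier_mat (Suc n) (Suc n)" and hM: "adj M = M"
    and M0: "\<And>i. i < Suc n \<Longrightarrow> M $$ (i,0) = (if i = 0 then e else 0)"
  obtains M' where "M' \<in> carrier_mat n n" "adj M' = M'" "M = diag_cons (complex_of_real (Re e)) M'"
proof -
  have Mh: "cnj (M $$ (j,i)) = M $$ (i,j)" if "i < Suc n" "j < Suc n" for i j
    using arg_cong[OF hM, of "\<lambda>X. X $$ (i,j)"] M that by simp
  define M' where "M' = mat n n (\<lambda>(i,j). M $$ (Suc i, Suc j))"
  have "cnj e = e" using Mh[of 0 0] M0[of 0] by simp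
  then have e: "complex_of_real (Re e) = e" by (simp add: complex_eq_iff)
  have "M' \<in> carrier_mat n n" by (simp add: M'_def)
  moreover have "adj M' = M'" by (rule eq_matI) (auto simp: M'_def Mh)
  moreover have "M = diag_cons (complex_of_real (Re e)) M'"
  proof (rule eq_matI)
    fix i j assume "i < dim_row (diag_cons (complex_of_real (Re e)) M')"
      "j < dim_col (diag_cons (complex_of_real (Re e)) M')"
    then have i: "i < Suc n" and j: "j < Suc n" by (auto simp: M'_def)
    have row0: "M $$ (0,j) = 0" if "0 < j" using Mh[of 0 j] M0[of j] j that by simp
    show "M $$ (i,j) = diag_cons (complex_of_real (Re e)) M' $$ (i,j)"
      using M0[OF i] row0 e i j by (cases i; cases j) (simp_all add: M'_def)
  qed (use M in \<open>auto simp: M'_def\<close>)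
  ultimately show ?thesis by (rule that)
qed

lemma hermitian_deflation:
  assumes A: "A \<in> carrier_mat (Suc n) (Suc n)" and hA: "adj A = A"
  obtains H e M where "unitary (Suc n) H" "M \<in> carrier_mat n n" "adj M = M"
    "adj H * A * H = diag_cons (complex_of_real e) M"
proof -
  obtain H e where H: "unitary (Suc n) H"
    and col: "\<And>i. i < Suc n \<Longrightarrow> (adj H * A * H) $$ (i,0) = (if i = 0 then e else 0)"
    using unitary_eigenvector_first_col[OF A] by blast
  have Hc: "H \<in> carrier_mat (Suc n) (Suc n)" using unitary_carrier[OF H] .
  have HA: "adj H * A \<in> carrier_mat (Suc n) (Suc n)" using adj_carrier[OF Hc] A by simp
  have "adj (adj H * A * H) = adj H * adj (adj H * A)" by (rule adj_mult[OF HA Hc])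
  also have "adj (adj H * A) = A * H" using adj_mult[OF adj_carrier[OF Hc] A] hA by simp
  also have "adj H * (A * H) = adj H * A * H" by (rule assoc_mult_mat[OF adj_carrier[OF Hc] A Hc, symmetric])
  finally obtain M where "M \<in> carrier_mat n n" "adj M = M"
    "adj H * A * H = diag_cons (complex_of_real (Re e)) M"
    using hermitian_first_col_diag_cons[OF mult_carrier_mat[OF HA Hc] _ col] by blast
  with H show ?thesis by (rule that)
qed

lemma conj_mult_assoc:
  assumes H: "H \<in> carrier_mat n n" and B: "B \<in> carrier_mat n n" and D: "D \<in> carrier_mat n n"
  shows "H * (B * D * adj B) * adj H = (H * B) * D * adj (H * B)"
proof -
  have assoc: "X * Y * Z = X * (Y * Z)"
    if "X \<in> carrier_mat n n" "Y \<in> carrier_mat n n" "Z \<in> carrier_mat n n" for X Y Z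
    using that by (rule assoc_mult_mat)
  have mult: "X * Y \<in> carrier_mat n n" if "X \<in> carrier_mat n n" "Y \<in> carrier_mat n n" for X Y
    using that by simp
  show ?thesis using H B D by (simp add: assoc mult adj_mult[OF H B])
qed

lemma diag_cons_conj:
  assumes U: "U \<in> carrier_mat n n" and D: "D \<in> carrier_mat n n"
  shows "diag_cons x (U * D * adj U) = diag_cons 1 U * diag_cons x D * adj (diag_cons 1 U)"
  using diag_cons_mult[OF U D] diag_cons_mult[OF mult_carrier_mat[OF U D] adj_carrier[OF U]]
  by (simp add: adj_diag_cons)

theorem hermitian_spectral_decomposition:
  assumes "A \<in> carrier_mat n n" "adj A = A"
  shows "\<exists>U d. unitary n U \<and> A = U * mat_diag n (\<lambda>i. complex_of_real (d i)) * adj U"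
  using assms
proof (induction n arbitrary: A)
  case 0
  show ?case
  proof (intro exI conjI)
    show "unitary 0 (1\<^sub>m 0)" by (simp add: unitary_def)
    show "A = 1\<^sub>m 0 * mat_diag 0 (\<lambda>i. complex_of_real 0) * adj (1\<^sub>m 0)"
      using 0 by (intro eq_matI) auto
  qed
next
  case (Suc n)
  obtain H e M where H: "unitary (Suc n) H" and M: "M \<in> carrier_mat n n" "adj M = M"
    and HAH: "adj H * A * H = diag_cons (complex_of_real e) M"
    using hermitian_deflation[OF Suc.prems] by blast
  obtain U d where U: "unitary n U" and M_eq: "M = U * mat_diag n (\<lambda>i. complex_of_real (d i)) * adj U"
    using Suc.IH[OF M] by blast
  define d' where "d' i = (if i = 0 then e else d (i - 1))" for i
  define B where "B = diag_cons 1 U"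
  let ?D = "mat_diag (Suc n) (\<lambda>i. complex_of_real (d' i))"
  have B: "unitary (Suc n) B" unfolding B_def by (rule unitary_diag_cons[OF U])
  have "?D = diag_cons (complex_of_real e) (mat_diag n (\<lambda>i. complex_of_real (d i)))"
    by (simp add: mat_diag_Suc d'_def)
  then have "adj H * A * H = B * ?D * adj B"
    unfolding HAH M_eq B_def using diag_cons_conj[OF unitary_carrier[OF U] mat_diag_dim] by simp
  then have "A = H * (B * ?D * adj B) * adj H" using unitary_undo_conj[OF H Suc.prems(1)] by simp
  also have "\<dots> = (H * B) * ?D * adj (H * B)"
    using conj_mult_assoc[OF unitary_carrier[OF H] unitary_carrier[OF B] mat_diag_dim] .
  finally show ?case using unitary_mult[OF H B] by blast
qed

section \<open>Positive semidefinite matrices\<close>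

definition qform :: "nat \<Rightarrow> complex mat \<Rightarrow> (nat \<Rightarrow> complex) \<Rightarrow> complex" where
  "qform n A x = (\<Sum>j<n. \<Sum>k<n. cnj (x j) * A $$ (j,k) * x k)"

lemma psd_carrier: "psd n A \<Longrightarrow> A \<in> carrier_mat n n"
  by (simp add: psd_def)

lemma psd_adj: "psd n A \<Longrightarrow> adj A = A"
  by (simp add: psd_def)

lemma density_carrier: "density n A \<Longrightarrow> A \<in> carrier_mat n n"
  by (simp add: density_def psd_def)

lemma qform_vec:
  assumes "A \<in> carrier_mat n n"
  shows "map_vec cnj (vec n x) \<bullet> (A *\<^sub>v vec n x) = qform n A x"
  using assms by (auto simp: qform_def scalar_prod_def atLeast0LessThan sum_distrib_left mult.assoc)

lemma psd_qform_nonneg: "psd n A \<Longrightarrow> 0 \<le> Re (qform n A x)"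
  using qform_vec[of A n x] by (auto simp: psd_def dest: bspec[of _ _ "vec n x"])

lemma psdI_qform:
  assumes A: "A \<in> carrier_mat n n" and "adj A = A" and "\<And>x. 0 \<le> Re (qform n A x)"
  shows "psd n A"
proof -
  have "map_vec cnj v \<bullet> (A *\<^sub>v v) = qform n A (\<lambda>j. v $ j)" if "v \<in> carrier_vec n" for v
  proof -
    have "vec n (\<lambda>j. v $ j) = v" using that by (intro eq_vecI) auto
    then show ?thesis using qform_vec[OF A, of "\<lambda>j. v $ j"] by simp
  qed
  then show ?thesis using assms by (simp add: psd_def)
qed

lemma qform_real:
  assumes A: "A \<in> carrier_mat n n" and hA: "adj A = A"
  shows "Im (qform n A x) = 0"
proof -
  have Ah: "cnj (A $$ (k,l)) = A $$ (l,k)" if "k < n" "l < n" for k l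
    using arg_cong[OF hA, of "\<lambda>X. X $$ (l,k)"] A that by simp
  have "cnj (qform n A x) = (\<Sum>j<n. \<Sum>k<n. x j * A $$ (k,j) * cnj (x k))"
    unfolding qform_def cnj_sum by (intro sum.cong refl) (simp add: Ah)
  also have "\<dots> = qform n A x" unfolding qform_def by (subst sum.swap) (simp only: mult_ac)
  finally show ?thesis by (simp add: complex_eq_iff)
qed

lemma qform_basis: "i < n \<Longrightarrow> qform n M (\<lambda>k. if k = i then 1 else 0) = M $$ (i,i)"
  by (simp add: qform_def if_distrib[of cnj] if_distrib[of "\<lambda>x. _ * x"] if_distrib[of "\<lambda>x. x * _"]
      cong: if_cong)

lemma qform_one: "qform n (1\<^sub>m n) x = (\<Sum>i<n. cnj (x i) * x i)"
  by (simp add: qform_def if_distrib[of "\<lambda>y. _ * y * _"] cong: if_cong)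

lemma psd_one: "psd n (1\<^sub>m n)"
  by (rule psdI_qform)
    (auto simp: qform_def if_distrib[of "\<lambda>x. x * _"] cnj_mult_self cong: if_cong intro!: sum_nonneg)

lemma psd_zero: "psd n (0\<^sub>m n n)"
  by (rule psdI_qform) (auto simp: qform_def)

lemma qform_unitary_col:
  assumes U: "unitary n U" and i: "i < n"
  shows "qform n (U * mat_diag n f * adj U) (\<lambda>j. U $$ (j,i)) = f i"
proof -
  have Uc: "U \<in> carrier_mat n n" using unitary_carrier[OF U] .
  let ?c = "\<lambda>l. \<Sum>j<n. cnj (U $$ (j,i)) * U $$ (j,l)"
  have "qform n (U * mat_diag n f * adj U) (\<lambda>j. U $$ (j,i))
      = (\<Sum>j<n. \<Sum>k<n. \<Sum>l<n. f l * (cnj (U $$ (j,i)) * U $$ (j,l)) * cnj (cnj (U $$ (k,i)) * U $$ (k,l)))"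
    unfolding qform_def
    by (intro sum.cong refl) (simp add: index_unitary_conj_diag[OF Uc] sum_distrib_left mult_ac)
  also have "\<dots> = (\<Sum>l<n. f l * ?c l * cnj (?c l))"
    by (subst sum.swap, subst (2) sum.swap)
      (simp add: sum_distrib_left sum_distrib_right cnj_sum mult_ac)
  also have "\<dots> = (\<Sum>l<n. if l = i then f i else 0)"
    using i by (intro sum.cong refl) (simp add: unitary_cols_orthonormal[OF U])
  finally show ?thesis using i by simp
qed

lemma sum_qform_unitary_cols:
  assumes U: "unitary n U" and A: "A \<in> carrier_mat n n"
  shows "(\<Sum>i<n. qform n A (\<lambda>j. U $$ (j,i))) = mtrace A"
proof -
  have "(\<Sum>i<n. qform n A (\<lambda>j. U $$ (j,i)))
      = (\<Sum>j<n. \<Sum>i<n. \<Sum>k<n. A $$ (j,k) * (U $$ (k,i) * cnj (U $$ (j,i))))"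
    unfolding qform_def by (subst sum.swap) (simp add: mult_ac)
  also have "\<dots> = (\<Sum>j<n. \<Sum>k<n. A $$ (j,k) * (\<Sum>i<n. U $$ (k,i) * cnj (U $$ (j,i))))"
    by (rule sum.cong[OF refl]) (simp only: sum_distrib_left, rule sum.swap)
  also have "\<dots> = (\<Sum>j<n. A $$ (j,j))"
    by (simp add: unitary_rows_orthonormal[OF U] if_distrib[of "\<lambda>x. _ * x"] cong: if_cong)
  finally show ?thesis using A by (simp add: mtrace_def)
qed

lemma psd_gram:
  assumes A: "psd n A"
  obtains g where "\<And>j k. j < n \<Longrightarrow> k < n \<Longrightarrow> A $$ (j,k) = (\<Sum>i<n. g i j * cnj (g i k))"
proof -
  obtain U d where U: "unitary n U" and AU: "A = U * mat_diag n (\<lambda>i. complex_of_real (d i)) * adj U"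
    using hermitian_spectral_decomposition[OF psd_carrier[OF A] psd_adj[OF A]] by blast
  have d0: "0 \<le> d i" if "i < n" for i
    using psd_qform_nonneg[OF A, of "\<lambda>j. U $$ (j,i)"] qform_unitary_col[OF U that] AU by simp
  define g where "g i j = complex_of_real (sqrt (d i)) * U $$ (j,i)" for i j
  have "A $$ (j,k) = (\<Sum>i<n. g i j * cnj (g i k))" if "j < n" "k < n" for j k
  proof -
    have "A $$ (j,k) = (\<Sum>i<n. U $$ (j,i) * complex_of_real (d i) * cnj (U $$ (k,i)))"
      unfolding AU using index_unitary_conj_diag[OF unitary_carrier[OF U] that] .
    also have "\<dots> = (\<Sum>i<n. g i j * cnj (g i k))"
    proof (rule sum.cong[OF refl])
      fix i assume "i \<in> {..<n}"
      then have "complex_of_real (d i) = complex_of_real (sqrt (d i)) * complex_of_real (sqrt (d i))"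
        using d0 by (simp flip: of_real_mult)
      then show "U $$ (j,i) * complex_of_real (d i) * cnj (U $$ (k,i)) = g i j * cnj (g i k)"
        by (simp add: g_def mult_ac)
    qed
    finally show ?thesis .
  qed
  then show ?thesis by (rule that)
qed

lemma mtrace_mult_sum:
  assumes A: "A \<in> carrier_mat n n" and Q: "Q \<in> carrier_mat n n"
  shows "mtrace (A * Q) = (\<Sum>k<n. \<Sum>l<n. A $$ (k,l) * Q $$ (l,k))"
  using A Q by (auto simp: mtrace_def scalar_prod_def atLeast0LessThan intro!: sum.cong)

lemma mtrace_mult_gram:
  assumes A: "A \<in> carrier_mat n n" and Q: "Q \<in> carrier_mat n n"
    and g: "\<And>j k. j < n \<Longrightarrow> k < n \<Longrightarrow> Q $$ (j,k) = (\<Sum>i<n. g i j * cnj (g i k))"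
  shows "mtrace (A * Q) = (\<Sum>i<n. qform n A (g i))"
proof -
  have "mtrace (A * Q) = (\<Sum>k<n. \<Sum>l<n. \<Sum>i<n. cnj (g i k) * A $$ (k,l) * g i l)"
    unfolding mtrace_mult_sum[OF A Q] by (intro sum.cong refl) (simp add: g sum_distrib_left mult_ac)
  also have "\<dots> = (\<Sum>i<n. qform n A (g i))"
    unfolding qform_def by (subst sum.swap, subst (2) sum.swap, rule refl)
  finally show ?thesis .
qed

lemma mtrace_mult_psd:
  assumes A: "psd n A" and Q: "psd n Q"
  shows "0 \<le> Re (mtrace (A * Q))" and "Im (mtrace (A * Q)) = 0"
proof -
  obtain g where g: "\<And>j k. j < n \<Longrightarrow> k < n \<Longrightarrow> Q $$ (j,k) = (\<Sum>i<n. g i j * cnj (g i k))"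
    using psd_gram[OF Q] by blast
  note tr = mtrace_mult_gram[OF psd_carrier[OF A] psd_carrier[OF Q] g]
  show "0 \<le> Re (mtrace (A * Q))"
    by (simp add: tr Re_sum sum_nonneg psd_qform_nonneg[OF A])
  show "Im (mtrace (A * Q)) = 0"
    by (simp add: tr Im_sum qform_real[OF psd_carrier[OF A] psd_adj[OF A]])
qed

lemma mtrace_mult_one_minus:
  assumes A: "A \<in> carrier_mat n n" and Q: "Q \<in> carrier_mat n n"
  shows "mtrace (A * (1\<^sub>m n - Q)) = mtrace A - mtrace (A * Q)"
proof -
  have "mtrace (A * (1\<^sub>m n - Q)) = (\<Sum>k<n. \<Sum>l<n. (if l = k then A $$ (k,l) else 0) - A $$ (k,l) * Q $$ (l,k))"
    unfolding mtrace_mult_sum[OF A minus_carrier_mat[OF Q]]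
    using Q by (intro sum.cong refl) (auto simp: algebra_simps)
  moreover have "mtrace A = (\<Sum>k<n. A $$ (k,k))" using A by (simp add: mtrace_def)
  ultimately show ?thesis by (simp add: mtrace_mult_sum[OF A Q] sum_subtractf)
qed

definition effect :: "nat \<Rightarrow> complex mat \<Rightarrow> bool" where
  "effect n Q \<longleftrightarrow> psd n Q \<and> psd n (1\<^sub>m n - Q)"

section \<open>The trace norm\<close>

lemma sum_roots_order_prod_linear:
  fixes as :: "complex list" and f :: "complex \<Rightarrow> real"
  assumes S: "finite S" "{z. poly (\<Prod>a\<leftarrow>as. [:- a, 1:]) z = 0} \<subseteq> S"
  shows "(\<Sum>z\<in>S. real (order z (\<Prod>a\<leftarrow>as. [:- a, 1:])) * f z) = (\<Sum>a\<leftarrow>as. f a)"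
  using S(2)
proof (induction as)
  case Nil
  then show ?case by (simp add: order_0I)
next
  case (Cons a as)
  let ?q = "\<Prod>a\<leftarrow>as. [:- a, 1:]"
  have "?q \<noteq> 0" by (auto simp: prod_list_zero_iff)
  moreover have "[:- a, 1:] \<noteq> (0 :: complex poly)" by simp
  ultimately have p0: "[:- a, 1:] * ?q \<noteq> 0" using mult_eq_0_iff by blast
  have "order z [:- a, 1:] = (if z = a then 1 else 0)" for z
    using order_power_n_n[of a 1] by (auto intro: order_0I)
  then have ord: "order z ([:- a, 1:] * ?q) = (if z = a then 1 else 0) + order z ?q" for z
    using order_mult[OF p0] by simp
  have "(\<Sum>z\<in>S. real (order z (\<Prod>x\<leftarrow>a # as. [:- x, 1:])) * f z)
      = (\<Sum>z\<in>S. (if z = a then f z else 0) + real (order z ?q) * f z)"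
    by (intro sum.cong refl) (simp only: list.map prod_list.Cons ord, simp add: algebra_simps)
  moreover have "{z. poly ?q z = 0} \<subseteq> S" and "a \<in> S" using Cons.prems by auto
  ultimately show ?case using Cons.IH S(1) by (simp add: sum.distrib)
qed

lemma trace_norm_unitary_diag:
  assumes U: "unitary n U"
  shows "trace_norm (U * mat_diag n (\<lambda>i. complex_of_real (d i)) * adj U) = (\<Sum>i<n. \<bar>d i\<bar>)"
proof -
  let ?D = "mat_diag n (\<lambda>i. complex_of_real (d i))"
  let ?D2 = "mat_diag n (\<lambda>i. complex_of_real ((d i)\<^sup>2))"
  let ?X = "U * ?D * adj U"
  have Uc: "U \<in> carrier_mat n n" and aU: "adj U \<in> carrier_mat n n"
    using U by (simp_all add: unitary_def)
  have UD: "U * ?D \<in> carrier_mat n n" using Uc by simp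
  have "adj ?X = U * adj (U * ?D)" using adj_mult[OF UD aU] by simp
  also have "adj (U * ?D) = ?D * adj U" using adj_mult[OF Uc mat_diag_dim] by simp
  finally have "adj ?X = ?X" using assoc_mult_mat[OF Uc mat_diag_dim aU] by simp
  then have "adj ?X * ?X = U * ?D * (adj U * (U * ?D * adj U))"
    using assoc_mult_mat[OF UD aU mult_carrier_mat[OF UD aU]] by simp
  also have "adj U * (U * ?D * adj U) = ?D * adj U"
    using unitary_cancel_left[OF U mat_diag_dim] assoc_mult_mat[OF aU UD aU, symmetric] by simp
  also have "U * ?D * (?D * adj U) = U * ?D2 * adj U"
    using assoc_mult_mat[OF UD mat_diag_dim aU, symmetric] assoc_mult_mat[OF Uc mat_diag_dim mat_diag_dim]
    by (simp add: power2_eq_square)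
  finally have XX: "adj ?X * ?X = U * ?D2 * adj U" .
  have "similar_mat (adj ?X * ?X) ?D2"
    unfolding similar_mat_def similar_mat_wit_def XX
    using Uc aU unitary_mult_adj[OF U] U by (intro exI[of _ U] exI[of _ "adj U"]) (auto simp: unitary_def Let_def)
  then have "char_poly (adj ?X * ?X) = char_poly ?D2" by (rule char_poly_similar)
  also have "\<dots> = (\<Prod>a\<leftarrow>map (\<lambda>i. complex_of_real ((d i)\<^sup>2)) [0..<n]. [:- a, 1:])"
    by (subst char_poly_upper_triangular[OF mat_diag_dim])
      (auto simp: upper_triangular_def diag_mat_def intro!: arg_cong[where f = prod_list] map_cong)
  finally have cp: "char_poly (adj ?X * ?X) = \<dots>" .
  have "(\<Prod>a\<leftarrow>map (\<lambda>i. complex_of_real ((d i)\<^sup>2)) [0..<n]. [:- a, 1:]) \<noteq> 0"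
    by (auto simp: prod_list_zero_iff)
  then have "trace_norm ?X = (\<Sum>a\<leftarrow>map (\<lambda>i. complex_of_real ((d i)\<^sup>2)) [0..<n]. sqrt (Re a))"
    unfolding trace_norm_def cp Let_def by (intro sum_roots_order_prod_linear poly_roots_finite) auto
  then show ?thesis by (simp add: sum_list_distinct_conv_sum_set atLeast0LessThan o_def)
qed

lemma diag_sum_le_trace_norm:
  assumes X: "X \<in> carrier_mat n n" and hX: "adj X = X"
  shows "(\<Sum>j<n. cmod (X $$ (j,j))) \<le> trace_norm X"
proof -
  obtain U d where U: "unitary n U" and XU: "X = U * mat_diag n (\<lambda>i. complex_of_real (d i)) * adj U"
    using hermitian_spectral_decomposition[OF X hX] by blast
  have Uc: "U \<in> carrier_mat n n" using unitary_carrier[OF U] .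
  have "(\<Sum>j<n. cmod (X $$ (j,j))) \<le> (\<Sum>j<n. \<Sum>i<n. \<bar>d i\<bar> * (cmod (U $$ (j,i)))\<^sup>2)"
  proof (rule sum_mono)
    fix j assume "j \<in> {..<n}"
    then have "X $$ (j,j) = (\<Sum>i<n. U $$ (j,i) * complex_of_real (d i) * cnj (U $$ (j,i)))"
      unfolding XU by (intro index_unitary_conj_diag[OF Uc]) auto
    then have "cmod (X $$ (j,j)) \<le> (\<Sum>i<n. cmod (U $$ (j,i) * complex_of_real (d i) * cnj (U $$ (j,i))))"
      by (simp add: norm_sum)
    then show "cmod (X $$ (j,j)) \<le> (\<Sum>i<n. \<bar>d i\<bar> * (cmod (U $$ (j,i)))\<^sup>2)"
      by (simp add: norm_mult power2_eq_square mult_ac)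
  qed
  also have "\<dots> = (\<Sum>i<n. \<bar>d i\<bar> * (\<Sum>j<n. (cmod (U $$ (j,i)))\<^sup>2))"
    by (subst sum.swap) (simp add: sum_distrib_left)
  also have "\<dots> = (\<Sum>i<n. \<bar>d i\<bar>)"
  proof (rule sum.cong[OF refl])
    fix i assume "i \<in> {..<n}"
    then have "complex_of_real (\<Sum>j<n. (cmod (U $$ (j,i)))\<^sup>2) = 1"
      using unitary_cols_orthonormal[OF U, of i i] by (simp add: cnj_mult_self)
    then show "\<bar>d i\<bar> * (\<Sum>j<n. (cmod (U $$ (j,i)))\<^sup>2) = \<bar>d i\<bar>"
      by (metis mult.right_neutral of_real_eq_1_iff)
  qed
  also have "\<dots> = trace_norm X" unfolding XU by (rule trace_norm_unitary_diag[OF U, symmetric])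
  finally show ?thesis .
qed

lemma hermitian_smult_diff:
  assumes A: "A \<in> carrier_mat n n" "adj A = A" and B: "B \<in> carrier_mat n n" "adj B = B"
  shows "adj (complex_of_real c \<cdot>\<^sub>m (A - B)) = complex_of_real c \<cdot>\<^sub>m (A - B)"
proof (rule eq_matI)
  fix i j assume "i < dim_row (complex_of_real c \<cdot>\<^sub>m (A - B))" "j < dim_col (complex_of_real c \<cdot>\<^sub>m (A - B))"
  then have i: "i < n" and j: "j < n" using B by auto
  have "cnj (A $$ (j,i)) = A $$ (i,j)" "cnj (B $$ (j,i)) = B $$ (i,j)"
    using arg_cong[OF A(2), of "\<lambda>X. X $$ (i,j)"] arg_cong[OF B(2), of "\<lambda>X. X $$ (i,j)"]
      A(1) B(1) i j by auto
  then show "adj (complex_of_real c \<cdot>\<^sub>m (A - B)) $$ (i,j) = (complex_of_real c \<cdot>\<^sub>m (A - B)) $$ (i,j)"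
    using A(1) B(1) i j by simp
qed (use B(1) in auto)

lemma qform_smult_diff:
  assumes "A \<in> carrier_mat n n" "B \<in> carrier_mat n n"
  shows "qform n (complex_of_real c \<cdot>\<^sub>m (A - B)) x = complex_of_real c * (qform n A x - qform n B x)"
proof -
  have "qform n (complex_of_real c \<cdot>\<^sub>m (A - B)) x = (\<Sum>j<n. \<Sum>k<n.
      complex_of_real c * (cnj (x j) * A $$ (j,k) * x k) - complex_of_real c * (cnj (x j) * B $$ (j,k) * x k))"
    unfolding qform_def using assms by (intro sum.cong refl) (simp add: algebra_simps)
  then show ?thesis unfolding qform_def by (simp add: sum_subtractf sum_distrib_left right_diff_distrib)
qed

text \<open>The eigenvalues of \<open>c (A - B)\<close> are \<open>c (\<langle>u,Au\<rangle> - \<langle>u,Bu\<rangle>)\<close> for its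
  orthonormal eigenvectors \<open>u\<close>, and summing \<open>\<langle>u,Au\<rangle>\<close> over an orthonormal basis gives
  the trace of \<open>A\<close>.\<close>

lemma trace_norm_smult_diff_psd_le:
  assumes A: "psd n A" and B: "psd n B" and c: "0 \<le> c"
  shows "trace_norm (complex_of_real c \<cdot>\<^sub>m (A - B)) \<le> c * Re (mtrace A + mtrace B)"
proof -
  let ?X = "complex_of_real c \<cdot>\<^sub>m (A - B)"
  have Ac: "A \<in> carrier_mat n n" and Bc: "B \<in> carrier_mat n n" using A B by (simp_all add: psd_def)
  obtain U d where U: "unitary n U" and XU: "?X = U * mat_diag n (\<lambda>i. complex_of_real (d i)) * adj U"
    using hermitian_spectral_decomposition[OF smult_carrier_mat[OF minus_carrier_mat[OF Bc]]
        hermitian_smult_diff[OF Ac psd_adj[OF A] Bc psd_adj[OF B]]] by blast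
  let ?u = "\<lambda>i j. U $$ (j,i)"
  have "\<bar>d i\<bar> \<le> c * (Re (qform n A (?u i)) + Re (qform n B (?u i)))" if i: "i < n" for i
  proof -
    have "d i = c * (Re (qform n A (?u i)) - Re (qform n B (?u i)))"
      using arg_cong[OF qform_unitary_col[OF U i, of "\<lambda>i. complex_of_real (d i)"], of Re]
      unfolding XU[symmetric] qform_smult_diff[OF Ac Bc] by simp
    moreover have "0 \<le> Re (qform n A (?u i))" "0 \<le> Re (qform n B (?u i))"
      using psd_qform_nonneg[OF A] psd_qform_nonneg[OF B] by auto
    ultimately show ?thesis using c by (simp add: abs_mult mult_left_mono)
  qed
  then have "(\<Sum>i<n. \<bar>d i\<bar>) \<le> (\<Sum>i<n. c * (Re (qform n A (?u i)) + Re (qform n B (?u i))))"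
    by (intro sum_mono) simp
  also have "\<dots> = c * (Re (\<Sum>i<n. qform n A (?u i)) + Re (\<Sum>i<n. qform n B (?u i)))"
    by (simp add: Re_sum sum.distrib sum_distrib_left distrib_left)
  also have "\<dots> = c * Re (mtrace A + mtrace B)"
    by (simp add: sum_qform_unitary_cols[OF U Ac] sum_qform_unitary_cols[OF U Bc])
  finally show ?thesis unfolding XU trace_norm_unitary_diag[OF U] .
qed

lemma twice_norm_le_sum_norm:
  fixes x :: "nat \<Rightarrow> complex"
  assumes x: "(\<Sum>j<n. x j) = 0" and k: "k < n"
  shows "2 * cmod (x k) \<le> (\<Sum>j<n. cmod (x j))"
proof -
  have "x k = - (\<Sum>j\<in>{..<n} - {k}. x j)"
    using sum.remove[of "{..<n}" k x] x k by (simp add: eq_neg_iff_add_eq_0)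
  then have "cmod (x k) \<le> (\<Sum>j\<in>{..<n} - {k}. cmod (x j))"
    by (metis norm_minus_cancel norm_sum)
  then show ?thesis using sum.remove[of "{..<n}" k "\<lambda>j. cmod (x j)"] k by simp
qed

lemma diag_diff_le_trace_dist:
  assumes A: "A \<in> carrier_mat n n" "adj A = A" and B: "B \<in> carrier_mat n n" "adj B = B"
    and tr: "mtrace A = mtrace B" and k: "k < n"
  shows "cmod (A $$ (k,k) - B $$ (k,k)) \<le> trace_dist A B"
proof -
  have "(\<Sum>j<n. (A - B) $$ (j,j)) = 0" using tr A B by (simp add: mtrace_def sum_subtractf)
  then have "2 * cmod ((A - B) $$ (k,k)) \<le> (\<Sum>j<n. cmod ((A - B) $$ (j,j)))"
    using k by (rule twice_norm_le_sum_norm)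
  also have "\<dots> \<le> trace_norm (A - B)"
    using A B by (intro diag_sum_le_trace_norm) (simp_all add: minus_carrier_mat adj_minus)
  finally show ?thesis using A B k by (simp add: trace_dist_def)
qed

lemma trace_dist_mixture_le:
  assumes \<rho>: "density n \<rho>" and \<sigma>: "density n \<sigma>" and p: "0 \<le> p"
  shows "trace_dist (complex_of_real p \<cdot>\<^sub>m \<rho> + complex_of_real (1 - p) \<cdot>\<^sub>m \<sigma>) \<sigma> \<le> p"
proof -
  have "complex_of_real p \<cdot>\<^sub>m \<rho> + complex_of_real (1 - p) \<cdot>\<^sub>m \<sigma> - \<sigma>
      = complex_of_real p \<cdot>\<^sub>m (\<rho> - \<sigma>)"
    using density_carrier[OF \<rho>] density_carrier[OF \<sigma>] by (intro eq_matI) (auto simp: algebra_simps)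
  moreover have "trace_norm (complex_of_real p \<cdot>\<^sub>m (\<rho> - \<sigma>)) \<le> p * Re (mtrace \<rho> + mtrace \<sigma>)"
    using \<rho> \<sigma> p by (intro trace_norm_smult_diff_psd_le[of n]) (simp_all add: density_def)
  ultimately show ?thesis using \<rho> \<sigma> by (simp add: trace_dist_def density_def)
qed

section \<open>Quantum channels in Kraus form\<close>

lemma foldr_add_mat:
  assumes "\<forall>x\<in>set xs. F x \<in> carrier_mat nr nc"
  shows "foldr (\<lambda>x acc. F x + acc) xs (0\<^sub>m nr nc) \<in> carrier_mat nr nc"
    and "i < nr \<Longrightarrow> j < nc \<Longrightarrow>
      foldr (\<lambda>x acc. F x + acc) xs (0\<^sub>m nr nc) $$ (i,j) = (\<Sum>t<length xs. F (xs ! t) $$ (i,j))"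
  using assms
proof (induction xs)
  case (Cons x xs)
  { case 1 then show ?case using Cons by simp }
  { case 2 then show ?case using Cons by (simp add: sum.lessThan_Suc_shift del: sum.lessThan_Suc) }
qed simp_all

lemma sum_lessThan_length_nth: "(\<Sum>t<length xs. f (xs ! t)) = (\<Sum>x\<leftarrow>xs. f x)"
  by (induction xs) (simp_all add: sum.lessThan_Suc_shift del: sum.lessThan_Suc)

lemma conj_mat_carrier:
  "K \<in> carrier_mat m n \<Longrightarrow> A \<in> carrier_mat n n \<Longrightarrow> K * A * adj K \<in> carrier_mat m m"
  by (metis adj_carrier mult_carrier_mat)

lemma kraus_apply_carrier:
  assumes "\<forall>K\<in>set Ks. K \<in> carrier_mat m n" "A \<in> carrier_mat n n"
  shows "kraus_apply m Ks A \<in> carrier_mat m m"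
  unfolding kraus_apply_def using assms by (intro foldr_add_mat) (auto intro: conj_mat_carrier)

lemma index_kraus_apply:
  assumes Ks: "\<forall>K\<in>set Ks. K \<in> carrier_mat m n" and A: "A \<in> carrier_mat n n"
    and i: "i < m" and j: "j < m"
  shows "kraus_apply m Ks A $$ (i,j) =
    (\<Sum>t<length Ks. \<Sum>k<n. \<Sum>l<n. Ks ! t $$ (i,k) * A $$ (k,l) * cnj (Ks ! t $$ (j,l)))"
proof -
  have entry: "(K * A * adj K) $$ (i,j) = (\<Sum>k<n. \<Sum>l<n. K $$ (i,k) * A $$ (k,l) * cnj (K $$ (j,l)))"
    if K: "K \<in> carrier_mat m n" for K
  proof -
    have "(K * A * adj K) $$ (i,j) = (\<Sum>l<n. (K * A) $$ (i,l) * adj K $$ (l,j))"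
      by (rule index_mult_mat_sum[OF mult_carrier_mat[OF K A] adj_carrier[OF K] i j])
    also have "\<dots> = (\<Sum>l<n. (\<Sum>k<n. K $$ (i,k) * A $$ (k,l)) * cnj (K $$ (j,l)))"
      using K j by (intro sum.cong refl, subst index_mult_mat_sum[OF K A i]) auto
    also have "\<dots> = (\<Sum>k<n. \<Sum>l<n. K $$ (i,k) * A $$ (k,l) * cnj (K $$ (j,l)))"
      by (simp only: sum_distrib_right, rule sum.swap)
    finally show ?thesis .
  qed
  have "kraus_apply m Ks A $$ (i,j) = (\<Sum>t<length Ks. (Ks ! t * A * adj (Ks ! t)) $$ (i,j))"
    unfolding kraus_apply_def using Ks A i j by (intro foldr_add_mat(2)) (auto intro: conj_mat_carrier)
  also have "\<dots> = (\<Sum>t<length Ks. \<Sum>k<n. \<Sum>l<n. Ks ! t $$ (i,k) * A $$ (k,l) * cnj (Ks ! t $$ (j,l)))"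
    using Ks by (intro sum.cong refl entry) auto
  finally show ?thesis .
qed

lemma kraus_completeness_index:
  assumes Ks: "\<forall>K\<in>set Ks. K \<in> carrier_mat m n"
    and S: "foldr (\<lambda>K acc. adj K * K + acc) Ks (0\<^sub>m n n) = 1\<^sub>m n" and k: "k < n" and l: "l < n"
  shows "(\<Sum>t<length Ks. \<Sum>i<m. cnj (Ks ! t $$ (i,k)) * Ks ! t $$ (i,l)) = (if k = l then 1 else 0)"
proof -
  have KK: "adj K * K \<in> carrier_mat n n" if "K \<in> carrier_mat m n" for K
    using mult_carrier_mat[OF adj_carrier[OF that] that] .
  have "(if k = l then 1 else 0) = (\<Sum>t<length Ks. (adj (Ks ! t) * Ks ! t) $$ (k,l))"
    using foldr_add_mat(2)[of Ks "\<lambda>K. adj K * K" n n k l] Ks S k l KK by simp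
  also have "\<dots> = (\<Sum>t<length Ks. \<Sum>i<m. cnj (Ks ! t $$ (i,k)) * Ks ! t $$ (i,l))"
  proof (rule sum.cong[OF refl])
    fix t assume "t \<in> {..<length Ks}"
    then have K: "Ks ! t \<in> carrier_mat m n" using Ks by auto
    show "(adj (Ks ! t) * Ks ! t) $$ (k,l) = (\<Sum>i<m. cnj (Ks ! t $$ (i,k)) * Ks ! t $$ (i,l))"
      using K k l by (subst index_mult_mat_sum[OF adj_carrier[OF K] K k l]) auto
  qed
  finally show ?thesis by simp
qed

lemma mtrace_kraus_apply:
  assumes Ks: "\<forall>K\<in>set Ks. K \<in> carrier_mat m n" and A: "A \<in> carrier_mat n n"
    and S: "foldr (\<lambda>K acc. adj K * K + acc) Ks (0\<^sub>m n n) = 1\<^sub>m n"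
  shows "mtrace (kraus_apply m Ks A) = mtrace A"
proof -
  let ?K = "\<lambda>t. Ks ! t" and ?L = "length Ks"
  have "mtrace (kraus_apply m Ks A)
      = (\<Sum>i<m. \<Sum>t<?L. \<Sum>k<n. \<Sum>l<n. ?K t $$ (i,k) * A $$ (k,l) * cnj (?K t $$ (i,l)))"
    using kraus_apply_carrier[OF Ks A] by (simp add: mtrace_def index_kraus_apply[OF Ks A])
  also have "\<dots> = (\<Sum>t<?L. \<Sum>k<n. \<Sum>l<n. \<Sum>i<m. ?K t $$ (i,k) * A $$ (k,l) * cnj (?K t $$ (i,l)))"
    by (subst sum.swap, rule sum.cong[OF refl], subst sum.swap, rule sum.cong[OF refl], rule sum.swap)
  also have "\<dots> = (\<Sum>k<n. \<Sum>l<n. A $$ (k,l) * (\<Sum>t<?L. \<Sum>i<m. cnj (?K t $$ (i,l)) * ?K t $$ (i,k)))"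
    by (subst sum.swap, rule sum.cong[OF refl], subst sum.swap, rule sum.cong[OF refl])
      (simp add: sum_distrib_left mult_ac)
  also have "\<dots> = (\<Sum>k<n. A $$ (k,k))"
    by (simp add: kraus_completeness_index[OF Ks S] if_distrib[of "\<lambda>x. _ * x"] cong: if_cong)
  finally show ?thesis using A by (simp add: mtrace_def)
qed

lemma adj_kraus_apply:
  assumes Ks: "\<forall>K\<in>set Ks. K \<in> carrier_mat m n" and A: "A \<in> carrier_mat n n" and hA: "adj A = A"
  shows "adj (kraus_apply m Ks A) = kraus_apply m Ks A"
proof (rule eq_matI)
  let ?E = "kraus_apply m Ks A"
  have E: "?E \<in> carrier_mat m m" by (rule kraus_apply_carrier[OF Ks A])
  have Ah: "cnj (A $$ (k,l)) = A $$ (l,k)" if "k < n" "l < n" for k l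
    using arg_cong[OF hA, of "\<lambda>X. X $$ (l,k)"] A that by simp
  fix i j assume "i < dim_row ?E" "j < dim_col ?E"
  then have i: "i < m" and j: "j < m" using E by auto
  have "adj ?E $$ (i,j)
      = (\<Sum>t<length Ks. \<Sum>k<n. \<Sum>l<n. cnj (Ks ! t $$ (j,k)) * A $$ (l,k) * Ks ! t $$ (i,l))"
    using E i j by (simp add: index_kraus_apply[OF Ks A j i] cnj_sum Ah)
  also have "\<dots> = ?E $$ (i,j)"
    unfolding index_kraus_apply[OF Ks A i j]
    by (rule sum.cong[OF refl], subst sum.swap) (simp add: mult_ac)
  finally show "adj ?E $$ (i,j) = ?E $$ (i,j)" .
qed (use kraus_apply_carrier[OF Ks A] in auto)

text \<open>The matrix of the effect \<open>\<E>\<^sup>\<dagger>(|r\<rangle>\<langle>r|)\<close>: measuring the output of the channel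
  \<open>\<E>\<close> in the computational basis and reporting outcome \<open>r\<close>.\<close>

definition kraus_effect :: "nat \<Rightarrow> complex mat list \<Rightarrow> nat \<Rightarrow> complex mat" where
  "kraus_effect n Ks r = mat n n (\<lambda>(l,k). \<Sum>t<length Ks. cnj (Ks ! t $$ (r,l)) * Ks ! t $$ (r,k))"

lemma psd_kraus_effect: "psd n (kraus_effect n Ks r)"
proof (rule psdI_qform)
  show "kraus_effect n Ks r \<in> carrier_mat n n" by (simp add: kraus_effect_def)
  show "adj (kraus_effect n Ks r) = kraus_effect n Ks r"
    by (rule eq_matI) (auto simp: kraus_effect_def cnj_sum mult.commute)
  fix x
  let ?y = "\<lambda>t. \<Sum>k<n. Ks ! t $$ (r,k) * x k"
  have "qform n (kraus_effect n Ks r) x = (\<Sum>l<n. \<Sum>k<n. \<Sum>t<length Ks. cnj (Ks ! t $$ (r,l) * x l) * (Ks ! t $$ (r,k) * x k))"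
    unfolding qform_def by (intro sum.cong refl) (simp add: kraus_effect_def sum_distrib_left sum_distrib_right mult_ac)
  also have "\<dots> = (\<Sum>t<length Ks. \<Sum>l<n. \<Sum>k<n. cnj (Ks ! t $$ (r,l) * x l) * (Ks ! t $$ (r,k) * x k))"
    by (subst sum.swap) (rule sum.cong[OF refl], rule sum.swap)
  also have "\<dots> = (\<Sum>t<length Ks. cnj (?y t) * ?y t)"
    by (simp add: cnj_sum sum_product)
  finally show "0 \<le> Re (qform n (kraus_effect n Ks r) x)"
    by (simp only: cnj_mult_self Re_sum Re_complex_of_real) (simp add: sum_nonneg)
qed

lemma mtrace_mult_kraus_effect:
  assumes Ks: "\<forall>K\<in>set Ks. K \<in> carrier_mat m n" and A: "A \<in> carrier_mat n n" and r: "r < m"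
  shows "mtrace (A * kraus_effect n Ks r) = kraus_apply m Ks A $$ (r,r)"
proof -
  have E: "kraus_effect n Ks r \<in> carrier_mat n n" by (simp add: kraus_effect_def)
  have "mtrace (A * kraus_effect n Ks r)
      = (\<Sum>k<n. \<Sum>l<n. \<Sum>t<length Ks. Ks ! t $$ (r,k) * A $$ (k,l) * cnj (Ks ! t $$ (r,l)))"
    unfolding mtrace_mult_sum[OF A E]
    by (auto simp: kraus_effect_def sum_distrib_left mult_ac intro!: sum.cong)
  also have "\<dots> = kraus_apply m Ks A $$ (r,r)"
    unfolding index_kraus_apply[OF Ks A r r]
    by (subst sum.swap) (rule sum.cong[OF refl], rule sum.swap)
  finally show ?thesis .
qed

lemma one_minus_kraus_effect:
  assumes Ks: "\<forall>K\<in>set Ks. K \<in> carrier_mat 2 n"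
    and S: "foldr (\<lambda>K acc. adj K * K + acc) Ks (0\<^sub>m n n) = 1\<^sub>m n"
  shows "1\<^sub>m n - kraus_effect n Ks 0 = kraus_effect n Ks 1"
proof (rule eq_matI)
  fix l k assume "l < dim_row (kraus_effect n Ks 1)" "k < dim_col (kraus_effect n Ks 1)"
  then have l: "l < n" and k: "k < n" by (auto simp: kraus_effect_def)
  have "(if l = k then 1 else 0) = (\<Sum>t<length Ks. cnj (Ks ! t $$ (0,l)) * Ks ! t $$ (0,k))
      + (\<Sum>t<length Ks. cnj (Ks ! t $$ (1,l)) * Ks ! t $$ (1,k))"
    using kraus_completeness_index[OF Ks S l k] by (simp add: numeral_2_eq_2 sum.distrib)
  then show "(1\<^sub>m n - kraus_effect n Ks 0) $$ (l,k) = kraus_effect n Ks 1 $$ (l,k)"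
    using l k by (auto simp: kraus_effect_def)
qed (auto simp: kraus_effect_def)

lemma effect_kraus_effect:
  assumes "\<forall>K\<in>set Ks. K \<in> carrier_mat 2 n" "foldr (\<lambda>K acc. adj K * K + acc) Ks (0\<^sub>m n n) = 1\<^sub>m n"
  shows "effect n (kraus_effect n Ks 0)"
  unfolding effect_def one_minus_kraus_effect[OF assms] by (simp add: psd_kraus_effect)

lemma index_outer_conj:
  assumes A: "A \<in> carrier_mat n n" and i: "i < m" and j: "j < m"
  shows "(outer_mat m n x y * A * adj (outer_mat m n x y)) $$ (i,j) = x i * cnj (x j) * qform n A y"
proof -
  have "(outer_mat m n x y * A) $$ (i,l) = x i * (\<Sum>k<n. cnj (y k) * A $$ (k,l))" if "l < n" for l
    using A i that by (subst index_mult_mat_sum[of _ m n _ n]) (auto simp: sum_distrib_left mult_ac)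
  then have "(outer_mat m n x y * A * adj (outer_mat m n x y)) $$ (i,j)
      = (\<Sum>l<n. x i * (\<Sum>k<n. cnj (y k) * A $$ (k,l)) * (y l * cnj (x j)))"
    using A i j by (subst index_mult_mat_sum[of _ m n _ m]) (auto simp: mult_ac)
  also have "\<dots> = x i * cnj (x j) * qform n A y"
    unfolding qform_def by (subst sum.swap) (simp add: sum_distrib_left sum_distrib_right mult_ac)
  finally show ?thesis .
qed

lemma index_adj_outer_mult_outer:
  assumes "k < n" "l < n"
  shows "(adj (outer_mat m n x y) * outer_mat m n x y) $$ (k,l) = qform m (1\<^sub>m m) x * (y k * cnj (y l))"
  using assms by (subst index_mult_mat_sum[of _ n m _ n]) (auto simp: qform_one sum_distrib_left mult_ac)

definition outer_kraus ::
    "nat \<Rightarrow> nat \<Rightarrow> (nat \<Rightarrow> nat \<Rightarrow> complex) \<Rightarrow> (nat \<Rightarrow> nat \<Rightarrow> complex) \<Rightarrow> complex mat list" where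
  "outer_kraus m n a g = [outer_mat m n (a p) (g q). p \<leftarrow> [0..<m], q \<leftarrow> [0..<n]]"

lemma outer_kraus_carrier: "\<forall>K\<in>set (outer_kraus m n a g). K \<in> carrier_mat m n"
  by (auto simp: outer_kraus_def)

lemma sum_outer_kraus:
  "(\<Sum>K\<leftarrow>outer_kraus m n a g. f K) = (\<Sum>p<m. \<Sum>q<n. f (outer_mat m n (a p) (g q)))"
proof -
  have "(\<Sum>K\<leftarrow>concat (map (\<lambda>p. map (F p) [0..<n]) ps). f K) = (\<Sum>p\<leftarrow>ps. \<Sum>q<n. f (F p q))"
    for ps and F :: "nat \<Rightarrow> nat \<Rightarrow> complex mat"
    by (induction ps) (simp_all add: interv_sum_list_conv_sum_set_nat atLeast0LessThan)
  then show ?thesis by (simp add: outer_kraus_def interv_sum_list_conv_sum_set_nat atLeast0LessThan)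
qed

lemma sum_outer_kraus_adj_mult:
  assumes "k < n" "l < n"
  shows "(\<Sum>K\<leftarrow>outer_kraus m n a g. (adj K * K) $$ (k,l))
    = (\<Sum>p<m. qform m (1\<^sub>m m) (a p)) * (\<Sum>q<n. g q k * cnj (g q l))"
  by (simp only: sum_outer_kraus index_adj_outer_mult_outer[OF assms] sum_product)

lemma sum_outer_kraus_conj:
  assumes "A \<in> carrier_mat n n" "i < m" "j < m"
  shows "(\<Sum>K\<leftarrow>outer_kraus m n a g. (K * A * adj K) $$ (i,j))
    = (\<Sum>p<m. a p i * cnj (a p j)) * (\<Sum>q<n. qform n A (g q))"
  by (simp only: sum_outer_kraus index_outer_conj[OF assms] sum_product)

lemma outer_kraus_complete:
  assumes Q: "Q \<in> carrier_mat n n"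
    and g: "\<And>j k. j < n \<Longrightarrow> k < n \<Longrightarrow> Q $$ (j,k) = (\<Sum>q<n. g q j * cnj (g q k))"
    and h: "\<And>j k. j < n \<Longrightarrow> k < n \<Longrightarrow> (1\<^sub>m n - Q) $$ (j,k) = (\<Sum>q<n. h q j * cnj (h q k))"
    and a: "(\<Sum>p<m. qform m (1\<^sub>m m) (a p)) = 1" and b: "(\<Sum>p<m. qform m (1\<^sub>m m) (b p)) = 1"
  shows "foldr (\<lambda>K acc. adj K * K + acc) (outer_kraus m n a g @ outer_kraus m n b h) (0\<^sub>m n n) = 1\<^sub>m n"
    (is "foldr ?f ?Ks _ = _")
proof -
  have Ks: "\<forall>K\<in>set ?Ks. adj K * K \<in> carrier_mat n n"
    using outer_kraus_carrier[of m n a g] outer_kraus_carrier[of m n b h]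
    by (auto intro: mult_carrier_mat[OF adj_carrier])
  show ?thesis
  proof (rule eq_matI)
    fix k l assume "k < dim_row (1\<^sub>m n)" "l < dim_col (1\<^sub>m n)"
    then have k: "k < n" and l: "l < n" by auto
    have "foldr ?f ?Ks (0\<^sub>m n n) $$ (k,l) = (\<Sum>t<length ?Ks. (adj (?Ks ! t) * ?Ks ! t) $$ (k,l))"
      using foldr_add_mat(2)[OF Ks k l] .
    also have "\<dots> = (\<Sum>K\<leftarrow>?Ks. (adj K * K) $$ (k,l))" by (rule sum_lessThan_length_nth)
    also have "\<dots> = Q $$ (k,l) + (1\<^sub>m n - Q) $$ (k,l)"
      using k l by (simp add: sum_outer_kraus_adj_mult a b g h)
    finally show "foldr ?f ?Ks (0\<^sub>m n n) $$ (k,l) = 1\<^sub>m n $$ (k,l)" using Q k l by simp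
  qed (use foldr_add_mat(1)[OF Ks] in auto)
qed




lemma kraus_apply_outer_kraus:
  assumes A: "A \<in> carrier_mat n n" and Q: "Q \<in> carrier_mat n n" "Q' \<in> carrier_mat n n"
    and P: "P \<in> carrier_mat m m" "P' \<in> carrier_mat m m"
    and a: "\<And>i j. i < m \<Longrightarrow> j < m \<Longrightarrow> P $$ (i,j) = (\<Sum>p<m. a p i * cnj (a p j))"
    and g: "\<And>j k. j < n \<Longrightarrow> k < n \<Longrightarrow> Q $$ (j,k) = (\<Sum>q<n. g q j * cnj (g q k))"
    and b: "\<And>i j. i < m \<Longrightarrow> j < m \<Longrightarrow> P' $$ (i,j) = (\<Sum>p<m. b p i * cnj (b p j))"
    and h: "\<And>j k. j < n \<Longrightarrow> k < n \<Longrightarrow> Q' $$ (j,k) = (\<Sum>q<n. h q j * cnj (h q k))"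
  shows "kraus_apply m (outer_kraus m n a g @ outer_kraus m n b h) A
    = mtrace (A * Q) \<cdot>\<^sub>m P + mtrace (A * Q') \<cdot>\<^sub>m P'" (is "kraus_apply m ?Ks A = _")
proof -
  have Ks: "\<forall>K\<in>set ?Ks. K \<in> carrier_mat m n"
    using outer_kraus_carrier[of m n a g] outer_kraus_carrier[of m n b h] by auto
  show ?thesis
  proof (rule eq_matI)
    fix i j assume "i < dim_row (mtrace (A * Q) \<cdot>\<^sub>m P + mtrace (A * Q') \<cdot>\<^sub>m P')"
      "j < dim_col (mtrace (A * Q) \<cdot>\<^sub>m P + mtrace (A * Q') \<cdot>\<^sub>m P')"
    then have i: "i < m" and j: "j < m" using P by auto
    have "kraus_apply m ?Ks A $$ (i,j) = (\<Sum>t<length ?Ks. (?Ks ! t * A * adj (?Ks ! t)) $$ (i,j))"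
      unfolding kraus_apply_def using Ks A i j by (intro foldr_add_mat(2)) (auto intro: conj_mat_carrier)
    also have "\<dots> = (\<Sum>K\<leftarrow>?Ks. (K * A * adj K) $$ (i,j))" by (rule sum_lessThan_length_nth)
    also have "\<dots> = P $$ (i,j) * mtrace (A * Q) + P' $$ (i,j) * mtrace (A * Q')"
      using A i j by (simp add: sum_outer_kraus_conj a b mtrace_mult_gram[OF A Q(1) g]
          mtrace_mult_gram[OF A Q(2) h])
    finally show "kraus_apply m ?Ks A $$ (i,j) = (mtrace (A * Q) \<cdot>\<^sub>m P + mtrace (A * Q') \<cdot>\<^sub>m P') $$ (i,j)"
      using P i j by (simp add: mult.commute)
  qed (use P kraus_apply_carrier[OF Ks A] in auto)
qed

text \<open>The measure-and-prepare channel \<open>A \<mapsto> tr(AQ) \<rho>' + tr(A(1 - Q)) \<sigma>'\<close> has the Kraus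
  operators \<open>|a\<rangle>\<langle>g|\<close>, where \<open>a\<close> and \<open>g\<close> run over Gram decompositions
  of \<open>\<rho>'\<close> and \<open>Q\<close> (respectively of \<open>\<sigma>'\<close> and \<open>1 - Q\<close>).\<close>

lemma quantum_channel_measure_prepare:
  assumes Q: "effect n Q" and \<rho>': "density m \<rho>'" and \<sigma>': "density m \<sigma>'"
  shows "quantum_channel n m
    (\<lambda>A. mtrace (A * Q) \<cdot>\<^sub>m \<rho>' + mtrace (A * (1\<^sub>m n - Q)) \<cdot>\<^sub>m \<sigma>')"
proof -
  have Qc: "Q \<in> carrier_mat n n" and \<rho>'c: "\<rho>' \<in> carrier_mat m m" and \<sigma>'c: "\<sigma>' \<in> carrier_mat m m"
    using Q \<rho>' \<sigma>' by (auto simp: effect_def psd_def density_def)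
  obtain g where g: "\<And>j k. j < n \<Longrightarrow> k < n \<Longrightarrow> Q $$ (j,k) = (\<Sum>q<n. g q j * cnj (g q k))"
    using Q psd_gram by (auto simp: effect_def)
  obtain h where h: "\<And>j k. j < n \<Longrightarrow> k < n \<Longrightarrow> (1\<^sub>m n - Q) $$ (j,k) = (\<Sum>q<n. h q j * cnj (h q k))"
    using Q psd_gram by (auto simp: effect_def)
  obtain a where a: "\<And>i j. i < m \<Longrightarrow> j < m \<Longrightarrow> \<rho>' $$ (i,j) = (\<Sum>p<m. a p i * cnj (a p j))"
    using \<rho>' psd_gram by (auto simp: density_def)
  obtain b where b: "\<And>i j. i < m \<Longrightarrow> j < m \<Longrightarrow> \<sigma>' $$ (i,j) = (\<Sum>p<m. b p i * cnj (b p j))"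
    using \<sigma>' psd_gram by (auto simp: density_def)
  have "(\<Sum>p<m. qform m (1\<^sub>m m) (a p)) = 1" "(\<Sum>p<m. qform m (1\<^sub>m m) (b p)) = 1"
    using mtrace_mult_gram[OF one_carrier_mat \<rho>'c a] mtrace_mult_gram[OF one_carrier_mat \<sigma>'c b]
      \<rho>' \<sigma>' \<rho>'c \<sigma>'c by (simp_all add: density_def)
  then have "foldr (\<lambda>K acc. adj K * K + acc) (outer_kraus m n a g @ outer_kraus m n b h) (0\<^sub>m n n) = 1\<^sub>m n"
    using outer_kraus_complete[OF Qc g h] by simp
  moreover have "\<forall>K\<in>set (outer_kraus m n a g @ outer_kraus m n b h). K \<in> carrier_mat m n"
    using outer_kraus_carrier[of m n a g] outer_kraus_carrier[of m n b h] by auto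
  moreover note kraus_apply_outer_kraus[OF _ Qc minus_carrier_mat[OF Qc] \<rho>'c \<sigma>'c a g b h]
  ultimately show ?thesis
    unfolding quantum_channel_def by (intro exI[of _ "outer_kraus m n a g @ outer_kraus m n b h"]) simp
qed

section \<open>Sequential compactness of the effects\<close>

lemma bounded_real_convergent_subseq:
  fixes s :: "nat \<Rightarrow> real"
  assumes "\<And>k. \<bar>s k\<bar> \<le> B"
  obtains r l where "strict_mono r" "(\<lambda>k. s (r k)) \<longlonglongrightarrow> l"
proof -
  obtain r where r: "strict_mono r" and m: "monoseq (\<lambda>k. s (r k))" using seq_monosub by blast
  have "Bseq (\<lambda>k. s (r k))" using assms by (intro BseqI'[of _ B]) simp
  then have "convergent (\<lambda>k. s (r k))" using m by (rule Bseq_monoseq_convergent)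
  then show ?thesis using r that unfolding convergent_def by blast
qed

lemma bounded_complex_convergent_subseq:
  fixes s :: "nat \<Rightarrow> complex"
  assumes "\<And>k. cmod (s k) \<le> B"
  obtains r l where "strict_mono r" "(\<lambda>k. s (r k)) \<longlonglongrightarrow> l"
proof -
  obtain r1 a where r1: "strict_mono r1" and a: "(\<lambda>k. Re (s (r1 k))) \<longlonglongrightarrow> a"
    using bounded_real_convergent_subseq[of "\<lambda>k. Re (s k)" B] assms abs_Re_le_cmod order_trans
    by metis
  obtain r2 b where r2: "strict_mono r2" and b: "(\<lambda>k. Im (s (r1 (r2 k)))) \<longlonglongrightarrow> b"
    using bounded_real_convergent_subseq[of "\<lambda>k. Im (s (r1 k))" B] assms abs_Im_le_cmod order_trans
    by metis
  have "(\<lambda>k. Re (s (r1 (r2 k)))) \<longlonglongrightarrow> a"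
    using LIMSEQ_subseq_LIMSEQ[OF a r2] by (simp add: o_def)
  then have "(\<lambda>k. Complex (Re (s (r1 (r2 k)))) (Im (s (r1 (r2 k))))) \<longlonglongrightarrow> Complex a b"
    using b by (rule tendsto_Complex)
  then have "(\<lambda>k. s (r1 (r2 k))) \<longlonglongrightarrow> Complex a b" by simp
  then show ?thesis using that strict_mono_o[OF r1 r2] by (simp add: o_def)
qed

lemma bounded_family_convergent_subseq:
  fixes F :: "nat \<Rightarrow> 'i \<Rightarrow> complex"
  assumes "finite I" and "\<And>i k. i \<in> I \<Longrightarrow> cmod (F k i) \<le> B"
  shows "\<exists>r L. strict_mono r \<and> (\<forall>i\<in>I. (\<lambda>k. F (r k) i) \<longlonglongrightarrow> L i)"
  using assms
proof (induction I rule: finite_induct)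
  case empty
  show ?case by (intro exI[of _ id]) (auto simp: strict_mono_def)
next
  case (insert x I)
  obtain r L where r: "strict_mono r" and L: "\<forall>i\<in>I. (\<lambda>k. F (r k) i) \<longlonglongrightarrow> L i"
    using insert.IH insert.prems by auto
  obtain s l where s: "strict_mono s" and l: "(\<lambda>k. F (r (s k)) x) \<longlonglongrightarrow> l"
    using bounded_complex_convergent_subseq[of "\<lambda>k. F (r k) x" B] insert.prems by auto
  have "(\<lambda>k. F (r (s k)) i) \<longlonglongrightarrow> (L(x := l)) i" if "i \<in> insert x I" for i
  proof (cases "i = x")
    case False
    then show ?thesis using LIMSEQ_subseq_LIMSEQ[OF bspec[OF L] s] that by (simp add: o_def)
  qed (use l in simp)
  then have "strict_mono (r \<circ> s) \<and> (\<forall>i\<in>insert x I. (\<lambda>k. F ((r \<circ> s) k) i) \<longlonglongrightarrow> (L(x := l)) i)"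
    using strict_mono_o[OF r s] by simp
  then show ?case by blast
qed

lemma psd_limit:
  assumes M: "\<And>k. psd n (M k)" and M0: "M0 \<in> carrier_mat n n"
    and lim: "\<And>j l. j < n \<Longrightarrow> l < n \<Longrightarrow> (\<lambda>k. M k $$ (j,l)) \<longlonglongrightarrow> M0 $$ (j,l)"
  shows "psd n M0"
proof (rule psdI_qform[OF M0])
  show "adj M0 = M0"
  proof (rule eq_matI)
    fix j l assume "j < dim_row M0" "l < dim_col M0"
    then have j: "j < n" and l: "l < n" using M0 by auto
    have "M k $$ (j,l) = cnj (M k $$ (l,j))" for k
      using arg_cong[OF psd_adj[OF M[of k]], of "\<lambda>X. X $$ (j,l)"] psd_carrier[OF M[of k]] j l by simp
    then have "(\<lambda>k. M k $$ (j,l)) \<longlonglongrightarrow> cnj (M0 $$ (l,j))"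
      using tendsto_cnj[OF lim[OF l j]] by simp
    then show "adj M0 $$ (j,l) = M0 $$ (j,l)" using LIMSEQ_unique[OF lim[OF j l]] M0 j l by simp
  qed (use M0 in auto)
  fix x
  have "(\<lambda>k. Re (qform n (M k) x)) \<longlonglongrightarrow> Re (qform n M0 x)"
    unfolding qform_def using lim by (auto intro!: tendsto_intros)
  then show "0 \<le> Re (qform n M0 x)"
    by (rule LIMSEQ_le_const) (use psd_qform_nonneg[OF M] in auto)
qed

lemma effect_index_bound:
  assumes Q: "effect n Q" and j: "j < n" and l: "l < n"
  shows "cmod (Q $$ (j,l)) \<le> 1"
proof -
  have pQ: "psd n Q" and pQ': "psd n (1\<^sub>m n - Q)" using Q by (simp_all add: effect_def)
  obtain g where g: "\<And>j k. j < n \<Longrightarrow> k < n \<Longrightarrow> Q $$ (j,k) = (\<Sum>i<n. g i j * cnj (g i k))"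
    using psd_gram[OF pQ] by blast
  have diag: "(\<Sum>i<n. (cmod (g i k))\<^sup>2) \<le> 1" if k: "k < n" for k
  proof -
    have "0 \<le> Re ((1\<^sub>m n - Q) $$ (k,k))"
      using psd_qform_nonneg[OF pQ', of "\<lambda>i. if i = k then 1 else 0"] qform_basis[OF k] by simp
    moreover have "Q $$ (k,k) = complex_of_real (\<Sum>i<n. (cmod (g i k))\<^sup>2)"
      using g[OF k k] by (simp only: complex_norm_square of_real_sum)
    ultimately show ?thesis using psd_carrier[OF pQ] k by simp
  qed
  have "cmod (Q $$ (j,l)) \<le> (\<Sum>i<n. cmod (g i j * cnj (g i l)))"
    unfolding g[OF j l] by (rule norm_sum)
  also have "\<dots> \<le> (\<Sum>i<n. ((cmod (g i j))\<^sup>2 + (cmod (g i l))\<^sup>2) / 2)"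
  proof (rule sum_mono)
    fix i
    have "0 \<le> (cmod (g i j) - cmod (g i l))\<^sup>2" by simp
    then show "cmod (g i j * cnj (g i l)) \<le> ((cmod (g i j))\<^sup>2 + (cmod (g i l))\<^sup>2) / 2"
      by (simp add: norm_mult power2_eq_square algebra_simps)
  qed
  also have "\<dots> \<le> 1"
    using diag[OF j] diag[OF l] by (simp add: sum_divide_distrib[symmetric] sum.distrib)
  finally show ?thesis .
qed

lemma effect_seq_convergent_subseq:
  fixes Qs :: "nat \<Rightarrow> complex mat"
  assumes Qs: "\<And>k. effect n (Qs k)"
  obtains r Q where "strict_mono r" "effect n Q"
    "\<forall>j<n. \<forall>l<n. (\<lambda>k. Qs (r k) $$ (j,l)) \<longlonglongrightarrow> Q $$ (j,l)"
proof -
  obtain r L where r: "strict_mono r"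
    and L: "\<forall>p\<in>{..<n} \<times> {..<n}. (\<lambda>k. Qs (r k) $$ p) \<longlonglongrightarrow> L p"
    using bounded_family_convergent_subseq[of "{..<n} \<times> {..<n}" "\<lambda>k p. Qs k $$ p" 1]
      effect_index_bound[OF Qs] by auto
  define Q where "Q = mat n n L"
  have Qc: "Q \<in> carrier_mat n n" by (simp add: Q_def)
  have lim: "(\<lambda>k. Qs (r k) $$ (j,l)) \<longlonglongrightarrow> Q $$ (j,l)" if "j < n" "l < n" for j l
    using L that by (simp add: Q_def)
  have Qsc: "Qs k \<in> carrier_mat n n" for k using Qs[of k] by (simp add: effect_def psd_def)
  have "psd n Q" using Qs by (intro psd_limit[OF _ Qc lim]) (simp_all add: effect_def)
  moreover have "psd n (1\<^sub>m n - Q)"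
  proof (rule psd_limit[where M = "\<lambda>k. 1\<^sub>m n - Qs (r k)"])
    fix j l assume "j < n" "l < n"
    then show "(\<lambda>k. (1\<^sub>m n - Qs (r k)) $$ (j,l)) \<longlonglongrightarrow> (1\<^sub>m n - Q) $$ (j,l)"
      using Qc by (simp add: carrier_matD[OF Qsc] tendsto_diff[OF tendsto_const lim])
  qed (use Qs Qc in \<open>simp_all add: effect_def minus_carrier_mat\<close>)
  ultimately have "effect n Q" by (simp add: effect_def)
  then show ?thesis using r lim by (intro that) auto
qed

lemma mtrace_mult_tendsto:
  assumes A: "A \<in> carrier_mat n n" and M: "\<And>k. M k \<in> carrier_mat n n" and M0: "M0 \<in> carrier_mat n n"
    and lim: "\<And>j l. j < n \<Longrightarrow> l < n \<Longrightarrow> (\<lambda>k. M k $$ (j,l)) \<longlonglongrightarrow> M0 $$ (j,l)"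
  shows "(\<lambda>k. mtrace (A * M k)) \<longlonglongrightarrow> mtrace (A * M0)"
  unfolding mtrace_mult_sum[OF A M] mtrace_mult_sum[OF A M0] using lim by (auto intro!: tendsto_intros)

section \<open>Hypothesis testing and relative majorization\<close>

lemma beta_eq: "beta n x \<rho> \<sigma> =
    Inf {Re (mtrace (\<sigma> * Q)) | Q. effect n Q \<and> 1 - x \<le> Re (mtrace (\<rho> * Q))}"
  by (simp add: beta_def effect_def conj_assoc)

lemma beta_le:
  assumes "effect n Q" "1 - x \<le> Re (mtrace (\<rho> * Q))" and \<sigma>: "psd n \<sigma>"
  shows "beta n x \<rho> \<sigma> \<le> Re (mtrace (\<sigma> * Q))"
  unfolding beta_eq
proof (rule cInf_lower)
  show "bdd_below {Re (mtrace (\<sigma> * Q)) | Q. effect n Q \<and> 1 - x \<le> Re (mtrace (\<rho> * Q))}"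
    by (rule bdd_belowI[of _ 0]) (auto simp: effect_def intro: mtrace_mult_psd(1)[OF \<sigma>])
qed (use assms in blast)

definition basis_proj :: "nat \<Rightarrow> nat \<Rightarrow> complex mat" where
  "basis_proj m r = mat m m (\<lambda>(i,j). if i = r \<and> j = r then 1 else 0)"

lemma density_basis_proj:
  assumes r: "r < m"
  shows "density m (basis_proj m r)"
proof -
  have "psd m (basis_proj m r)"
  proof (rule psdI_qform)
    show "adj (basis_proj m r) = basis_proj m r" by (rule eq_matI) (auto simp: basis_proj_def)
    have "qform m (basis_proj m r) x = cnj (x r) * x r" for x
    proof -
      have "(\<Sum>k<m. if j = r \<and> k = r then c else 0) = (if j = r then c else 0)"
        for j and c :: complex using r by (cases "j = r") simp_all
      then show ?thesis
        using r by (simp add: qform_def basis_proj_def if_distrib[of "\<lambda>y. _ * y * _"] cong: if_cong)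
    qed
    then show "0 \<le> Re (qform m (basis_proj m r) x)" for x by (simp add: cnj_mult_self)
  qed (simp add: basis_proj_def)
  moreover have "mtrace (basis_proj m r) = 1" using r by (simp add: mtrace_def basis_proj_def)
  ultimately show ?thesis by (simp add: density_def)
qed

lemma beta_le_of_rel_maj_basis_proj:
  assumes \<rho>: "density n \<rho>" and \<sigma>: "density n \<sigma>"
    and maj: "rel_maj n 2 er es \<rho> \<sigma> (basis_proj 2 0) (basis_proj 2 1)"
  shows "beta n er \<rho> \<sigma> \<le> es"
proof -
  obtain E Ks where Ks: "\<forall>K\<in>set Ks. K \<in> carrier_mat 2 n"
    and S: "foldr (\<lambda>K acc. adj K * K + acc) Ks (0\<^sub>m n n) = 1\<^sub>m n"
    and EK: "\<forall>A\<in>carrier_mat n n. E A = kraus_apply 2 Ks A"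
    and d\<rho>: "trace_dist (E \<rho>) (basis_proj 2 0) \<le> er" and d\<sigma>: "trace_dist (E \<sigma>) (basis_proj 2 1) \<le> es"
    using maj unfolding rel_maj_def quantum_channel_def by blast
  define Q where "Q = kraus_effect n Ks 0"
  have dist: "cmod (mtrace (A * Q) - basis_proj 2 r $$ (0,0)) \<le> trace_dist (E A) (basis_proj 2 r)"
    if A: "density n A" and r: "r < 2" for A r
  proof -
    have Ac: "A \<in> carrier_mat n n" using A by (rule density_carrier)
    have P: "density 2 (basis_proj 2 r)" using r by (rule density_basis_proj)
    have "cmod (kraus_apply 2 Ks A $$ (0,0) - basis_proj 2 r $$ (0,0))
        \<le> trace_dist (kraus_apply 2 Ks A) (basis_proj 2 r)"
    proof (rule diag_diff_le_trace_dist)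
      show "kraus_apply 2 Ks A \<in> carrier_mat 2 2" by (rule kraus_apply_carrier[OF Ks Ac])
      show "adj (kraus_apply 2 Ks A) = kraus_apply 2 Ks A"
        using A by (intro adj_kraus_apply[OF Ks Ac]) (simp add: density_def psd_def)
      show "mtrace (kraus_apply 2 Ks A) = mtrace (basis_proj 2 r)"
        using A P by (simp add: mtrace_kraus_apply[OF Ks Ac S] density_def)
    qed (use P in \<open>simp_all add: density_def psd_def\<close>)
    then show ?thesis using EK Ac by (simp add: Q_def mtrace_mult_kraus_effect[OF Ks Ac])
  qed
  have "cmod (mtrace (\<rho> * Q) - 1) \<le> er" using dist[OF \<rho>, of 0] d\<rho> by (simp add: basis_proj_def)
  then have "1 - er \<le> Re (mtrace (\<rho> * Q))" using abs_Re_le_cmod[of "mtrace (\<rho> * Q) - 1"] by simp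
  moreover have "cmod (mtrace (\<sigma> * Q)) \<le> es" using dist[OF \<sigma>, of 1] d\<sigma> by (simp add: basis_proj_def)
  then have "Re (mtrace (\<sigma> * Q)) \<le> es" using abs_Re_le_cmod[of "mtrace (\<sigma> * Q)"] by simp
  moreover have "effect n Q" unfolding Q_def by (rule effect_kraus_effect[OF Ks S])
  ultimately show ?thesis
    using beta_le[of n Q er \<rho> \<sigma>] \<sigma> by (simp add: density_def)
qed

lemma rel_maj_of_effect:
  assumes Q: "effect n Q" and \<rho>: "density n \<rho>" and \<sigma>: "density n \<sigma>"
    and \<rho>Q: "1 - er \<le> Re (mtrace (\<rho> * Q))" and \<sigma>Q: "Re (mtrace (\<sigma> * Q)) \<le> es"
    and \<rho>': "density m \<rho>'" and \<sigma>': "density m \<sigma>'"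
  shows "rel_maj n m er es \<rho> \<sigma> \<rho>' \<sigma>'"
proof -
  let ?E = "\<lambda>A. mtrace (A * Q) \<cdot>\<^sub>m \<rho>' + mtrace (A * (1\<^sub>m n - Q)) \<cdot>\<^sub>m \<sigma>'"
  have dist: "trace_dist (?E A) \<rho>' \<le> 1 - Re (mtrace (A * Q))"
    "trace_dist (?E A) \<sigma>' \<le> Re (mtrace (A * Q))" if A: "density n A" for A
  proof -
    define p where "p = Re (mtrace (A * Q))"
    have pA: "psd n A" and Ac: "A \<in> carrier_mat n n" and tA: "mtrace A = 1"
      using A by (auto simp: density_def psd_def)
    have Qc: "Q \<in> carrier_mat n n" and pQ: "psd n Q" and pQ': "psd n (1\<^sub>m n - Q)"
      using Q by (auto simp: effect_def psd_def)
    have tr: "mtrace (A * Q) = complex_of_real p"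
      using mtrace_mult_psd(2)[OF pA pQ] by (simp add: p_def complex_eq_iff)
    have tr': "mtrace (A * (1\<^sub>m n - Q)) = complex_of_real (1 - p)"
      by (simp add: mtrace_mult_one_minus[OF Ac Qc] tA tr)
    have p0: "0 \<le> p" using mtrace_mult_psd(1)[OF pA pQ] by (simp add: p_def)
    have p1: "0 \<le> 1 - p" using mtrace_mult_psd(1)[OF pA pQ'] by (simp add: tr')
    have E1: "?E A = complex_of_real p \<cdot>\<^sub>m \<rho>' + complex_of_real (1 - p) \<cdot>\<^sub>m \<sigma>'"
      by (simp add: tr tr')
    also have "\<dots> = complex_of_real (1 - p) \<cdot>\<^sub>m \<sigma>' + complex_of_real (1 - (1 - p)) \<cdot>\<^sub>m \<rho>'"
      using density_carrier[OF \<rho>'] density_carrier[OF \<sigma>'] by (simp add: comm_add_mat[of _ m m])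
    finally have E2: "?E A = \<dots>" .
    show "trace_dist (?E A) \<rho>' \<le> 1 - p" unfolding E2 by (rule trace_dist_mixture_le[OF \<sigma>' \<rho>' p1])
    show "trace_dist (?E A) \<sigma>' \<le> p" unfolding E1 by (rule trace_dist_mixture_le[OF \<rho>' \<sigma>' p0])
  qed
  show ?thesis
    unfolding rel_maj_def
    using quantum_channel_measure_prepare[OF Q \<rho>' \<sigma>'] dist(1)[OF \<rho>] dist(2)[OF \<sigma>] \<rho>Q \<sigma>Q by force
qed

lemma beta_approx_seq:
  assumes \<rho>: "density n \<rho>" and x: "0 \<le> x"
  shows "\<exists>Qs. \<forall>k. effect n (Qs k) \<and> 1 - x \<le> Re (mtrace (\<rho> * Qs k))
    \<and> Re (mtrace (\<sigma> * Qs k)) < beta n x \<rho> \<sigma> + inverse (Suc k)"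
proof -
  let ?S = "{Re (mtrace (\<sigma> * Q)) | Q. effect n Q \<and> 1 - x \<le> Re (mtrace (\<rho> * Q))}"
  have z: "1\<^sub>m n - 1\<^sub>m n = (0\<^sub>m n n :: complex mat)" by (rule eq_matI) auto
  have "effect n (1\<^sub>m n)" unfolding effect_def z using psd_one psd_zero by blast
  then have "Re (mtrace (\<sigma> * 1\<^sub>m n)) \<in> ?S"
    using \<rho> density_carrier[OF \<rho>] x by (auto simp: density_def)
  then have ne: "?S \<noteq> {}" by blast
  have "\<exists>Q. effect n Q \<and> 1 - x \<le> Re (mtrace (\<rho> * Q))
      \<and> Re (mtrace (\<sigma> * Q)) < beta n x \<rho> \<sigma> + inverse (Suc k)" for k
    using cInf_lessD[OF ne, of "beta n x \<rho> \<sigma> + inverse (Suc k)"] by (auto simp: beta_eq)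
  then show ?thesis by metis
qed

lemma beta_attained:
  assumes \<rho>: "density n \<rho>" and \<sigma>: "density n \<sigma>" and x: "0 \<le> x"
  obtains Q where "effect n Q" "1 - x \<le> Re (mtrace (\<rho> * Q))" "Re (mtrace (\<sigma> * Q)) = beta n x \<rho> \<sigma>"
proof -
  let ?\<beta> = "beta n x \<rho> \<sigma>"
  have \<rho>c: "\<rho> \<in> carrier_mat n n" and \<sigma>c: "\<sigma> \<in> carrier_mat n n" and p\<sigma>: "psd n \<sigma>"
    using \<rho> \<sigma> by (auto simp: density_def psd_def)
  obtain Qs where Qs: "\<And>k. effect n (Qs k)" "\<And>k. 1 - x \<le> Re (mtrace (\<rho> * Qs k))"
    "\<And>k. Re (mtrace (\<sigma> * Qs k)) < ?\<beta> + inverse (Suc k)"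
    using beta_approx_seq[OF \<rho> x, of \<sigma>] by blast
  obtain r Q where r: "strict_mono r" and Q: "effect n Q"
    and lim: "\<forall>j<n. \<forall>l<n. (\<lambda>k. Qs (r k) $$ (j,l)) \<longlonglongrightarrow> Q $$ (j,l)"
    by (rule effect_seq_convergent_subseq[OF Qs(1)])
  have Qsc: "Qs (r k) \<in> carrier_mat n n" for k using Qs(1) by (simp add: effect_def psd_def)
  have Qc: "Q \<in> carrier_mat n n" using Q by (simp add: effect_def psd_def)
  have "(\<lambda>k. Re (mtrace (\<rho> * Qs (r k)))) \<longlonglongrightarrow> Re (mtrace (\<rho> * Q))"
    using lim by (intro tendsto_Re mtrace_mult_tendsto[OF \<rho>c Qsc Qc]) auto
  then have Q1: "1 - x \<le> Re (mtrace (\<rho> * Q))" by (rule LIMSEQ_le_const) (use Qs(2) in blast)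
  have "Re (mtrace (\<sigma> * Q)) \<le> ?\<beta>"
  proof (rule LIMSEQ_le)
    show "(\<lambda>k. Re (mtrace (\<sigma> * Qs (r k)))) \<longlonglongrightarrow> Re (mtrace (\<sigma> * Q))"
      using lim by (intro tendsto_Re mtrace_mult_tendsto[OF \<sigma>c Qsc Qc]) auto
    show "(\<lambda>k. ?\<beta> + inverse (real (Suc k))) \<longlonglongrightarrow> ?\<beta>"
      using tendsto_add[OF tendsto_const LIMSEQ_inverse_real_of_nat] by simp
    have "inverse (real (Suc (r k))) \<le> inverse (real (Suc k))" for k
      using seq_suble[OF r, of k] by (simp add: le_imp_inverse_le)
    then show "\<exists>N. \<forall>k\<ge>N. Re (mtrace (\<sigma> * Qs (r k))) \<le> ?\<beta> + inverse (real (Suc k))"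
      using Qs(3) by (meson add_left_mono less_imp_le order_trans)
  qed
  moreover have "?\<beta> \<le> Re (mtrace (\<sigma> * Q))" by (rule beta_le[OF Q Q1 p\<sigma>])
  ultimately show ?thesis using that[OF Q Q1] by simp
qed

theorem lemma13:
  fixes n :: nat and \<rho> \<sigma> :: "complex mat" and er es :: real
  assumes "density n \<rho>" and "density n \<sigma>" and "0 \<le> er" and "0 \<le> es"
  shows "beta n er \<rho> \<sigma> \<le> es \<longleftrightarrow>
    (\<forall>m \<rho>' \<sigma>'. density m \<rho>' \<and> density m \<sigma>' \<longrightarrow> rel_maj n m er es \<rho> \<sigma> \<rho>' \<sigma>')"
proof
  assume "beta n er \<rho> \<sigma> \<le> es"
  moreover obtain Q where "effect n Q" "1 - er \<le> Re (mtrace (\<rho> * Q))"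
    "Re (mtrace (\<sigma> * Q)) = beta n er \<rho> \<sigma>"
    using beta_attained[OF assms(1-3)] .
  ultimately show "\<forall>m \<rho>' \<sigma>'. density m \<rho>' \<and> density m \<sigma>' \<longrightarrow> rel_maj n m er es \<rho> \<sigma> \<rho>' \<sigma>'"
    using rel_maj_of_effect[OF _ assms(1,2)] by simp
next
  assume "\<forall>m \<rho>' \<sigma>'. density m \<rho>' \<and> density m \<sigma>' \<longrightarrow> rel_maj n m er es \<rho> \<sigma> \<rho>' \<sigma>'"
  then have "rel_maj n 2 er es \<rho> \<sigma> (basis_proj 2 0) (basis_proj 2 1)"
    using density_basis_proj[of 0 2] density_basis_proj[of 1 2] by simp
  then show "beta n er \<rho> \<sigma> \<le> es" by (rule beta_le_of_rel_maj_basis_proj[OF assms(1,2)])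
qed

end
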